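(* Under the hypotheses of the Hölder-continuity theorem (kernel $k$ satisfying (K1)–(K2), $q\in[1,2)$, $p\in(2,\infty)$, $\omega\in L^q(\Omega)\cap L^p_{\mathrm{ul}}(\Omega)$), there is a constant $C>0$ depending only on $C_1,C_2,q$ (not on $p$) such that $$\int_\Omega|k(x,z)-k(y,z)|\,|\omega(z)|\,dz\le C\max\{1,\tfrac1{p-2}\}\big(\|\omega\|_{L^q(\Omega)}+\|\omega\|_{L^p_{\mathrm{ul}}(\Omega)}\big)\,p\,\mathrm{d}(x,y)^{1-2/p}$$ for all $x,y\in\Omega$. Moreover, if $\Theta$ is a growth function as in the context and $\omega\in L^q(\Omega)\cap Y^\Theta_{\mathrm{ul}}(\Omega)$, then there is a constant $C'>0$ depending only on $C_1,C_2,q$ (not on the behavior of $\Theta$ at infinity) such that $$\int_\Omega|k(x,z)-k(y,z)|\,|\omega(z)|\,dz\le C'\big(\|\omega\|_{L^q(\Omega)}+\|\omega\|_{Y^\Theta_{\mathrm{ul}}(\Omega)}\big)\,\phi_\Theta(\mathrm{d}(x,y))\quad\text{for all }x,y\in\Omega.$$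
   Context: Setting: $\Omega$ is either an open subset of $\mathbb{R}^2$ (not necessarily bounded) or $\mathbb{T}^2$; $\mathrm{d}$ is the Euclidean distance (resp. geodesic distance on $\mathbb{T}^2$); $B_r(x)$ the open ball. $L^p_{\mathrm{ul}}$: $\|f\|_{L^p_{\mathrm{ul}}(\Omega)}=\sup_{x\in\Omega}\|f\|_{L^p(\Omega\cap B_1(x))}$, $L^p_{\mathrm{ul}}(\Omega)$ the set of $f\in L^p_{\mathrm{loc}}$ with finite norm. Growth function: $\Theta:[1,\infty)\to(0,\infty)$ non-decreasing, normalized so that $\Theta(3)\ge1$. Yudovich space: $Y^\Theta_{\mathrm{ul}}(\Omega)=\{f\in\bigcap_{p\in[1,\infty)}L^p_{\mathrm{ul}}(\Omega):\|f\|_{Y^\Theta_{\mathrm{ul}}}=\sup_{p\ge1}\|f\|_{L^p_{\mathrm{ul}}(\Omega)}/\Theta(p)<\infty\}$. Modulus $\phi_\Theta:[0,\infty)\to[0,\infty)$: $\phi_\Theta(0)=0$, $\phi_\Theta(r)=r(1-\log r)\Theta(1-\log r)$ for $r\in(0,e^{-2}]$, $\phi_\Theta(r)=3e^{-2}\Theta(3)$ for $r>e^{-2}$. Kernel: $k:\Omega\times\Omega\to\mathbb{R}^2$ with (K1) $|k(x,y)|\le C_1/\mathrm{d}(x,y)$ for $x\neq y$; (K2) $|k(x,z)-k(y,z)|\le C_2\,\mathrm{d}(x,y)/(\mathrm{d}(x,z)\mathrm{d}(y,z))$ for $z\ne x,y$. *)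

theory Defs
  imports "HOL-Analysis.Analysis"
begin

type_synonym pt = "real ^ 2"

definition torus_fd :: "pt set" where
  "torus_fd = {x. \<forall>i. 0 \<le> x $ i \<and> x $ i < 1}"

definition torus_dist :: "pt \<Rightarrow> pt \<Rightarrow> real" where
  "torus_dist x y = Inf {dist x (y + v) | v. \<forall>i. v $ i \<in> \<int>}"

text \<open>In both cases the measure is Lebesgue measure restricted to the carrier.\<close>
definition admissible_domain :: "pt set \<Rightarrow> (pt \<Rightarrow> pt \<Rightarrow> real) \<Rightarrow> bool" where
  "admissible_domain S d \<longleftrightarrow> (open S \<and> d = dist) \<or> (S = torus_fd \<and> d = torus_dist)"

definition Lp_int :: "real \<Rightarrow> pt set \<Rightarrow> (pt \<Rightarrow> real) \<Rightarrow> ennreal" where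
  "Lp_int p A f = (\<integral>\<^sup>+ z\<in>A. ennreal (\<bar>f z\<bar> powr p) \<partial>lebesgue)"

definition memLp :: "real \<Rightarrow> pt set \<Rightarrow> (pt \<Rightarrow> real) \<Rightarrow> bool" where
  "memLp p A f \<longleftrightarrow> set_borel_measurable lebesgue A f \<and> Lp_int p A f < \<infinity>"

definition Lp_norm :: "real \<Rightarrow> pt set \<Rightarrow> (pt \<Rightarrow> real) \<Rightarrow> real" where
  "Lp_norm p A f = enn2real (Lp_int p A f) powr (1 / p)"

definition unit_ball :: "pt set \<Rightarrow> (pt \<Rightarrow> pt \<Rightarrow> real) \<Rightarrow> pt \<Rightarrow> pt set" where
  "unit_ball S d x = {y \<in> S. d x y < 1}"

definition ul_norm :: "real \<Rightarrow> pt set \<Rightarrow> (pt \<Rightarrow> pt \<Rightarrow> real) \<Rightarrow> (pt \<Rightarrow> real) \<Rightarrow> real" where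
  "ul_norm p S d f = (SUP x\<in>S. Lp_norm p (unit_ball S d x) f)"

definition memLp_ul :: "real \<Rightarrow> pt set \<Rightarrow> (pt \<Rightarrow> pt \<Rightarrow> real) \<Rightarrow> (pt \<Rightarrow> real) \<Rightarrow> bool" where
  "memLp_ul p S d f \<longleftrightarrow> set_borel_measurable lebesgue S f
     \<and> (\<forall>x\<in>S. Lp_int p (unit_ball S d x) f < \<infinity>)
     \<and> bdd_above ((\<lambda>x. Lp_norm p (unit_ball S d x) f) ` S)"

definition growth_function :: "(real \<Rightarrow> real) \<Rightarrow> bool" where
  "growth_function \<Theta> \<longleftrightarrow> (\<forall>p\<ge>1. \<Theta> p > 0) \<and> mono_on {1..} \<Theta> \<and> \<Theta> 3 \<ge> 1"

definition memY_ul :: "(real \<Rightarrow> real) \<Rightarrow> pt set \<Rightarrow> (pt \<Rightarrow> pt \<Rightarrow> real) \<Rightarrow> (pt \<Rightarrow> real) \<Rightarrow> bool" where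
  "memY_ul \<Theta> S d f \<longleftrightarrow> (\<forall>p\<ge>1. memLp_ul p S d f)
     \<and> bdd_above ((\<lambda>p. ul_norm p S d f / \<Theta> p) ` {1..})"

definition Y_ul_norm :: "(real \<Rightarrow> real) \<Rightarrow> pt set \<Rightarrow> (pt \<Rightarrow> pt \<Rightarrow> real) \<Rightarrow> (pt \<Rightarrow> real) \<Rightarrow> real" where
  "Y_ul_norm \<Theta> S d f = (SUP p\<in>{1..}. ul_norm p S d f / \<Theta> p)"

definition phi_Theta :: "(real \<Rightarrow> real) \<Rightarrow> real \<Rightarrow> real" where
  "phi_Theta \<Theta> r = (if r = 0 then 0
     else if r \<le> exp (-2) then r * (1 - ln r) * \<Theta> (1 - ln r)
     else 3 * exp (-2) * \<Theta> 3)"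

definition kernel_K1K2 :: "pt set \<Rightarrow> (pt \<Rightarrow> pt \<Rightarrow> real) \<Rightarrow> (pt \<Rightarrow> pt \<Rightarrow> pt) \<Rightarrow> real \<Rightarrow> real \<Rightarrow> bool" where
  "kernel_K1K2 S d k C1 C2 \<longleftrightarrow>
     (\<forall>x\<in>S. \<forall>y\<in>S. x \<noteq> y \<longrightarrow> norm (k x y) \<le> C1 / d x y)
   \<and> (\<forall>x\<in>S. \<forall>y\<in>S. \<forall>z\<in>S. z \<noteq> x \<and> z \<noteq> y \<longrightarrow>
        norm (k x z - k y z) \<le> C2 * d x y / (d x z * d y z))"

end

theory Submission
  imports Defs
begin

text \<open>Bound |k(x,z) - k(y,z)| pointwise by P(d(x,z)) + P(d(y,z)), where P(t) = 2|C1|/t for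
  t < 2 d(x,y), by (K1), and P(t) = |C2| d(x,y)/t^2 otherwise, by (K2). Around each centre the
  integral of P |\<omega>| is split at the radii 2 d(x,y) and 1: the two inner pieces are estimated by
  Hoelder's inequality against the L^p norm on the unit ball, the outer one against the L^q norm.
  Balls of radius \<rho> have area at most 36 \<rho>^2 (on the torus: nine translated Euclidean balls), so a
  dyadic decomposition gives \<integral>_{d < \<rho>} d^{-s} \<lesssim> \<rho>^{2-s}/(2-s) for s < 2 and
  \<integral>_{d \<ge> \<rho>} d^{-s} \<lesssim> \<rho>^{2-s}/(s-2) for s > 2. With s the conjugate exponent of p, resp. twice
  it, these produce the factors max 1 (1/(p-2)) and p. The Yudovich estimate follows by choosing
  p = 1 - ln d(x,y) when d(x,y) \<le> e^{-2}.\<close>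

section \<open>Area of distance balls\<close>

lemma emeasure_lebesgue_ball_le: "r \<ge> 0 \<Longrightarrow> emeasure lebesgue (ball (c::pt) r) \<le> ennreal (4 * r^2)"
proof -
  assume r: "r \<ge> 0"
  have "emeasure lebesgue (ball c r) = emeasure lborel (ball c r)" by simp
  also have "\<dots> = ennreal (measure lborel (ball c r))"
    using emeasure_lborel_ball_finite[of c r] by (intro emeasure_eq_ennreal_measure) auto
  also have "measure lborel (ball c r) = r^2 * pi" using circle_area[OF r] by simp
  also have "r^2 * pi \<le> 4 * r^2" using pi_less_4 by (simp add: mult.commute mult_right_mono)
  finally show ?thesis by (simp add: ennreal_leI)
qed

lemma torus_dist_set_nonempty: "{dist c (z + v) | v. \<forall>i. v $ i \<in> \<int>} \<noteq> {}"
  by (rule ccontr) (auto dest: spec[of _ 0])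

lemma torus_dist_set_bdd_below: "bdd_below {dist c (z + v) | v::pt. \<forall>i. v $ i \<in> \<int>}"
  by (rule bdd_belowI[of _ 0]) auto

lemma torus_dist_nonneg: "torus_dist c z \<ge> 0"
  unfolding torus_dist_def by (rule cInf_greatest[OF torus_dist_set_nonempty]) auto

lemma torus_dist_le_dist: "torus_dist c z \<le> torus_dist c z' + dist z z'"
proof -
  have "torus_dist c z - dist z z' \<le> torus_dist c z'"
    unfolding torus_dist_def[of c z']
  proof (rule cInf_greatest[OF torus_dist_set_nonempty])
    fix t assume "t \<in> {dist c (z' + v) | v. \<forall>i. v $ i \<in> \<int>}"
    then obtain v where v: "\<forall>i. v $ i \<in> \<int>" and t: "t = dist c (z' + v)" by auto
    have "torus_dist c z \<le> dist c (z + v)"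
      unfolding torus_dist_def by (rule cInf_lower[OF _ torus_dist_set_bdd_below]) (use v in auto)
    also have "\<dots> \<le> dist c (z' + v) + dist (z' + v) (z + v)" by (rule dist_triangle)
    also have "dist (z' + v) (z + v) = dist z z'" by (simp add: dist_norm norm_minus_commute)
    finally show "torus_dist c z - dist z z' \<le> t" using t by simp
  qed
  then show ?thesis by simp
qed

lemma torus_dist_lipschitz: "1-lipschitz_on UNIV (torus_dist c)"
proof (rule lipschitz_onI)
  fix x y :: pt
  have "torus_dist c x \<le> torus_dist c y + dist x y" by (rule torus_dist_le_dist)
  moreover have "torus_dist c y \<le> torus_dist c x + dist y x" by (rule torus_dist_le_dist)
  ultimately show "dist (torus_dist c x) (torus_dist c y) \<le> 1 * dist x y"
    by (simp add: dist_real_def dist_commute abs_le_iff)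
qed simp

lemma continuous_imp_lebesgue_measurable:
  "continuous_on UNIV (f::pt \<Rightarrow> real) \<Longrightarrow> f \<in> borel_measurable lebesgue"
  by (drule borel_measurable_continuous_onI) (simp add: measurable_completion measurable_lborel2)

lemma Ints_abs_less_2: "(m::real) \<in> \<int> \<Longrightarrow> \<bar>m\<bar> < 2 \<Longrightarrow> m \<in> {-1,0,1}"
proof -
  assume "m \<in> \<int>" "\<bar>m\<bar> < 2"
  then obtain n::int where n: "m = of_int n" and "\<bar>n\<bar> < 2" by (auto elim: Ints_cases)
  then have "n = -1 \<or> n = 0 \<or> n = 1" by linarith
  then show ?thesis using n by auto
qed

lemma torus_ball_subset_translates:
  assumes c: "c \<in> torus_fd" and r: "r \<le> 1"
  shows "{z \<in> torus_fd. torus_dist c z < r} \<subseteq>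
    (\<Union>ab\<in>{-1,0,1::real}\<times>{-1,0,1::real}. ball (c - vector [fst ab, snd ab]) r)"
proof
  fix z assume "z \<in> {z \<in> torus_fd. torus_dist c z < r}"
  then have z: "z \<in> torus_fd" and zr: "torus_dist c z < r" by auto
  obtain t where "t \<in> {dist c (z + v) | v. \<forall>i. v $ i \<in> \<int>}" "t < r"
    using cInf_lessD[OF torus_dist_set_nonempty zr[unfolded torus_dist_def]] by blast
  then obtain v where v: "\<forall>i. v $ i \<in> \<int>" and vr: "dist c (z + v) < r" by auto
  have comp: "v $ i \<in> {-1,0,1}" for i
  proof (rule Ints_abs_less_2)
    show "v $ i \<in> \<int>" using v by auto
    have "\<bar>(c - (z + v)) $ i\<bar> \<le> norm (c - (z + v))" by (rule component_le_norm_cart)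
    also have "\<dots> < 1" using vr r by (simp add: dist_norm)
    finally have "\<bar>c $ i - z $ i - v $ i\<bar> < 1" by simp
    moreover have "0 \<le> c $ i" "c $ i < 1" "0 \<le> z $ i" "z $ i < 1"
      using c z by (auto simp: torus_fd_def)
    ultimately show "\<bar>v $ i\<bar> < 2" by (auto simp: abs_less_iff)
  qed
  have "v = vector [v $ 1, v $ 2]"
    by (simp add: vec_eq_iff forall_2 vector_2)
  moreover have "z \<in> ball (c - v) r"
    using vr by (simp add: dist_norm algebra_simps)
  ultimately show "z \<in> (\<Union>ab\<in>{-1,0,1::real}\<times>{-1,0,1::real}. ball (c - vector [fst ab, snd ab]) r)"
    using comp[of 1] comp[of 2] by (intro UN_I[of "(v$1, v$2)"]) auto
qed

lemma torus_fd_subset_ball: "torus_fd \<subseteq> ball 0 3"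
proof
  fix z :: pt assume z: "z \<in> torus_fd"
  have "norm z \<le> (\<Sum>i\<in>UNIV. \<bar>z $ i\<bar>)" by (rule norm_le_l1_cart)
  also have "\<dots> = \<bar>z $ 1\<bar> + \<bar>z $ 2\<bar>" by (simp add: UNIV_2)
  also have "\<dots> < 3" using z unfolding torus_fd_def
    by (smt (verit, best) mem_Collect_eq)
  finally show "z \<in> ball 0 3" by simp
qed

lemma torus_fd_sets_lebesgue: "torus_fd \<in> sets lebesgue"
proof -
  have "torus_fd \<in> sets borel" unfolding torus_fd_def by measurable
  then show ?thesis by auto
qed

lemma emeasure_torus_ball_le:
  assumes c: "c \<in> torus_fd" and r: "0 < r"
  shows "emeasure lebesgue {z \<in> torus_fd. torus_dist c z < r} \<le> ennreal (36 * r^2)"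
proof (cases "r \<le> 1")
  case True
  let ?I = "{-1,0,1::real}\<times>{-1,0,1::real}"
  let ?A = "\<lambda>ab. ball (c - vector [fst ab, snd ab]) r"
  have "emeasure lebesgue {z \<in> torus_fd. torus_dist c z < r} \<le> emeasure lebesgue (\<Union>ab\<in>?I. ?A ab)"
    by (rule emeasure_mono[OF torus_ball_subset_translates[OF c True]]) auto
  also have "\<dots> \<le> (\<Sum>ab\<in>?I. emeasure lebesgue (?A ab))"
    by (rule emeasure_subadditive_finite) auto
  also have "\<dots> \<le> (\<Sum>ab\<in>?I. ennreal (4 * r^2))"
    by (rule sum_mono, rule emeasure_lebesgue_ball_le) (use r in auto)
  also have "\<dots> = ennreal (36 * r^2)"
    using ennreal_mult[of 9 "4*r^2"] by simp
  finally show ?thesis .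
next
  case False
  have "emeasure lebesgue {z \<in> torus_fd. torus_dist c z < r} \<le> emeasure lebesgue (ball (0::pt) 3)"
    by (rule emeasure_mono) (use torus_fd_subset_ball in auto)
  also have "\<dots> \<le> ennreal (4 * 3^2)" by (rule emeasure_lebesgue_ball_le) simp
  also have "\<dots> \<le> ennreal (36 * r^2)"
    using False by (intro ennreal_leI) (simp add: power_le_one_iff one_le_power)
  finally show ?thesis .
qed

definition quadratic_area_growth :: "pt set \<Rightarrow> (pt \<Rightarrow> pt \<Rightarrow> real) \<Rightarrow> bool" where
  "quadratic_area_growth S d \<longleftrightarrow> S \<in> sets lebesgue
     \<and> (\<forall>c\<in>S. d c \<in> borel_measurable lebesgue \<and> (\<forall>z. d c z \<ge> 0)
          \<and> (\<forall>r>0. emeasure lebesgue {z \<in> S. d c z < r} \<le> ennreal (36 * r^2)))"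

lemma admissible_domain_quadratic_area_growth:
  "admissible_domain S d \<Longrightarrow> quadratic_area_growth S d"
  unfolding admissible_domain_def
proof (elim disjE conjE)
  assume S: "open S" and d: "d = dist"
  show "quadratic_area_growth S d" unfolding quadratic_area_growth_def d
  proof (intro conjI ballI allI impI)
    show "S \<in> sets lebesgue" using S by auto
    fix c assume "c \<in> S"
    show "dist c \<in> borel_measurable lebesgue"
      by (rule continuous_imp_lebesgue_measurable) (intro continuous_intros)
    show "0 \<le> dist c z" for z by simp
    fix r :: real assume r: "0 < r"
    have "emeasure lebesgue {z \<in> S. dist c z < r} \<le> emeasure lebesgue (ball c r)"
      by (rule emeasure_mono) auto
    also have "\<dots> \<le> ennreal (4 * r^2)" by (rule emeasure_lebesgue_ball_le) (use r in auto)
    also have "\<dots> \<le> ennreal (36 * r^2)" by (intro ennreal_leI) simp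
    finally show "emeasure lebesgue {z \<in> S. dist c z < r} \<le> ennreal (36 * r^2)" .
  qed
next
  assume S: "S = torus_fd" and d: "d = torus_dist"
  have "torus_dist c \<in> borel_measurable lebesgue" for c
    using continuous_imp_lebesgue_measurable lipschitz_on_continuous_on torus_dist_lipschitz by blast
  then show "quadratic_area_growth S d" unfolding quadratic_area_growth_def S d
    using torus_fd_sets_lebesgue torus_dist_nonneg emeasure_torus_ball_le by blast
qed

section \<open>Hoelder's inequality\<close>

lemma Youngs_inequality_scaled:
  fixes a b :: real
  assumes p: "1 < p" and p': "1 < p'" and pq: "1/p + 1/p' = 1"
    and ab: "0 \<le> a" "0 \<le> b" and FG: "F > 0" "G > 0"
  shows "a * b \<le> G * F / (p * F powr p) * a powr p + F * G / (p' * G powr p') * b powr p'"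
proof -
  have "(a / F) * (b / G) \<le> (a / F) powr p / p + (b / G) powr p' / p'"
    by (rule Youngs_inequality) (use p p' pq ab FG in auto)
  then have "(F * G) * ((a / F) * (b / G)) \<le> (F * G) * ((a / F) powr p / p + (b / G) powr p' / p')"
    using FG by (intro mult_left_mono) auto
  also have "(F * G) * ((a / F) * (b / G)) = a * b" using FG by simp
  also have "(F * G) * ((a / F) powr p / p + (b / G) powr p' / p')
      = G * F / (p * F powr p) * a powr p + F * G / (p' * G powr p') * b powr p'"
    using FG ab by (simp add: powr_divide field_simps)
  finally show ?thesis .
qed

lemma nn_integral_Holder_le:
  fixes f g :: "'a \<Rightarrow> real"
  assumes p: "1 < p" and p': "1 < p'" and pq: "1/p + 1/p' = 1"
    and fm: "f \<in> borel_measurable M" and f0: "\<And>z. f z \<ge> 0"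
    and gm: "g \<in> borel_measurable M" and g0: "\<And>z. g z \<ge> 0"
    and F: "F \<ge> 0" "(\<integral>\<^sup>+ z. ennreal (f z powr p) \<partial>M) \<le> ennreal (F powr p)"
    and G: "G > 0" "(\<integral>\<^sup>+ z. ennreal (g z powr p') \<partial>M) \<le> ennreal (G powr p')"
  shows "(\<integral>\<^sup>+ z. ennreal (f z * g z) \<partial>M) \<le> ennreal (F * G)"
proof (cases "F = 0")
  case True
  then have "(\<integral>\<^sup>+ z. ennreal (f z powr p) \<partial>M) = 0" using F p by simp
  then have "AE z in M. ennreal (f z powr p) = 0"
    by (subst (asm) nn_integral_0_iff_AE) (use fm in auto)
  then have "AE z in M. f z = 0" by eventually_elim (use p f0 in auto)
  then have "(\<integral>\<^sup>+ z. ennreal (f z * g z) \<partial>M) = (\<integral>\<^sup>+ z. 0 \<partial>M)"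
    by (intro nn_integral_cong_AE) auto
  then show ?thesis by simp
next
  case False
  with F have Fp: "F > 0" by simp
  define \<alpha> where "\<alpha> = G * F / (p * F powr p)"
  define \<beta> where "\<beta> = F * G / (p' * G powr p')"
  have \<alpha>0: "\<alpha> \<ge> 0" and \<beta>0: "\<beta> \<ge> 0" using Fp G p p' by (auto simp: \<alpha>_def \<beta>_def)
  have pw: "f z * g z \<le> \<alpha> * f z powr p + \<beta> * g z powr p'" for z
    unfolding \<alpha>_def \<beta>_def by (rule Youngs_inequality_scaled) (use p p' pq f0 g0 Fp G in auto)
  have "(\<integral>\<^sup>+ z. ennreal (f z * g z) \<partial>M) \<le> (\<integral>\<^sup>+ z. ennreal (\<alpha> * f z powr p) + ennreal (\<beta> * g z powr p') \<partial>M)"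
    by (intro nn_integral_mono) (use pw \<alpha>0 \<beta>0 in \<open>auto simp: ennreal_plus[symmetric] simp del: ennreal_plus intro!: ennreal_leI\<close>)
  also have "\<dots> = (\<integral>\<^sup>+ z. ennreal (\<alpha> * f z powr p) \<partial>M) + (\<integral>\<^sup>+ z. ennreal (\<beta> * g z powr p') \<partial>M)"
    by (rule nn_integral_add) (use fm gm in auto)
  also have "(\<integral>\<^sup>+ z. ennreal (\<alpha> * f z powr p) \<partial>M) = ennreal \<alpha> * (\<integral>\<^sup>+ z. ennreal (f z powr p) \<partial>M)"
    by (subst nn_integral_cmult[symmetric]) (use fm \<alpha>0 in \<open>auto simp: ennreal_mult\<close>)
  also have "(\<integral>\<^sup>+ z. ennreal (\<beta> * g z powr p') \<partial>M) = ennreal \<beta> * (\<integral>\<^sup>+ z. ennreal (g z powr p') \<partial>M)"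
    by (subst nn_integral_cmult[symmetric]) (use gm \<beta>0 in \<open>auto simp: ennreal_mult\<close>)
  also have "ennreal \<alpha> * (\<integral>\<^sup>+ z. ennreal (f z powr p) \<partial>M) + ennreal \<beta> * (\<integral>\<^sup>+ z. ennreal (g z powr p') \<partial>M)
      \<le> ennreal \<alpha> * ennreal (F powr p) + ennreal \<beta> * ennreal (G powr p')"
    by (intro add_mono mult_left_mono F G) auto
  also have "\<dots> = ennreal (\<alpha> * F powr p + \<beta> * G powr p')"
    using \<alpha>0 \<beta>0 by (simp add: ennreal_mult ennreal_plus)
  also have "\<alpha> * F powr p + \<beta> * G powr p' = F * G * (1/p + 1/p')"
    using Fp G p p' by (simp add: \<alpha>_def \<beta>_def field_simps)
  finally show ?thesis using pq by simp
qed

lemma Lp_norm_nonneg: "Lp_norm p E f \<ge> 0"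
  by (simp add: Lp_norm_def)

lemma Lp_int_mono: "E \<subseteq> B \<Longrightarrow> Lp_int p E f \<le> Lp_int p B f"
  unfolding Lp_int_def by (intro nn_integral_mono) (auto split: split_indicator)

lemma Lp_int_eq_Lp_norm_powr:
  assumes "Lp_int p E f < \<infinity>" "p > 0"
  shows "Lp_int p E f = ennreal (Lp_norm p E f powr p)"
proof -
  have "(enn2real (Lp_int p E f) powr (1/p)) powr p = enn2real (Lp_int p E f)"
    using assms by (simp add: powr_powr)
  then show ?thesis
    using assms unfolding Lp_norm_def by (simp add: less_top)
qed

lemma Lp_norm_le_ul_norm:
  assumes "memLp_ul p S d f" and "c \<in> S"
  shows "Lp_norm p (unit_ball S d c) f \<le> ul_norm p S d f"
  unfolding ul_norm_def by (rule cSUP_upper) (use assms in \<open>auto simp: memLp_ul_def\<close>)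

lemma ul_norm_nonneg: "memLp_ul p S d f \<Longrightarrow> c \<in> S \<Longrightarrow> ul_norm p S d f \<ge> 0"
  using Lp_norm_le_ul_norm Lp_norm_nonneg order_trans by blast

lemma Lp_int_le_ul_norm_powr:
  assumes ul: "memLp_ul p S d f" and c: "c \<in> S" and p: "p > 0"
    and E: "E \<subseteq> unit_ball S d c"
  shows "Lp_int p E f \<le> ennreal (ul_norm p S d f powr p)"
proof -
  let ?B = "unit_ball S d c"
  have fin: "Lp_int p ?B f < \<infinity>" using ul c unfolding memLp_ul_def by auto
  have "Lp_int p E f \<le> Lp_int p ?B f" by (rule Lp_int_mono[OF E])
  also have "\<dots> = ennreal (Lp_norm p ?B f powr p)" by (rule Lp_int_eq_Lp_norm_powr[OF fin p])
  also have "\<dots> \<le> ennreal (ul_norm p S d f powr p)"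
    using p Lp_norm_nonneg Lp_norm_le_ul_norm[OF ul c] by (intro ennreal_leI powr_mono2) auto
  finally show ?thesis .
qed

lemma nn_integral_Holder_Lp_int:
  fixes \<omega> g :: "pt \<Rightarrow> real"
  assumes p: "1 < p" and E: "E \<in> sets lebesgue" "E \<subseteq> S"
    and \<omega>m: "set_borel_measurable lebesgue S \<omega>"
    and F: "F \<ge> 0" "Lp_int p E \<omega> \<le> ennreal (F powr p)"
    and gm: "g \<in> borel_measurable lebesgue" and g0: "\<And>z. g z \<ge> 0"
    and B: "B > 0" "(\<integral>\<^sup>+ z. ennreal (g z powr (p/(p-1))) \<partial>lebesgue) \<le> ennreal B"
  shows "(\<integral>\<^sup>+ z\<in>E. ennreal (g z * \<bar>\<omega> z\<bar>) \<partial>lebesgue) \<le> ennreal (F * B powr ((p-1)/p))"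
proof -
  define p' where "p' = p/(p-1)"
  have p': "1 < p'" using p by (simp add: p'_def field_simps)
  have pq: "1/p + 1/p' = 1" using p by (simp add: p'_def field_simps)
  define f where "f z = indicator E z * \<bar>indicator S z *\<^sub>R \<omega> z\<bar>" for z
  have fm: "f \<in> borel_measurable lebesgue" unfolding f_def
    by (intro borel_measurable_times borel_measurable_abs \<omega>m[unfolded set_borel_measurable_def] borel_measurable_indicator E(1))
  have f0: "f z \<ge> 0" for z by (simp add: f_def)
  have fE: "f z = indicator E z * \<bar>\<omega> z\<bar>" for z using E(2) by (auto simp: f_def split: split_indicator)
  have "(\<integral>\<^sup>+ z. ennreal (f z powr p) \<partial>lebesgue) = Lp_int p E \<omega>"
    unfolding Lp_int_def fE by (intro nn_integral_cong) (auto split: split_indicator)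
  then have Fb: "(\<integral>\<^sup>+ z. ennreal (f z powr p) \<partial>lebesgue) \<le> ennreal (F powr p)" using F by simp
  define G where "G = B powr (1/p')"
  have G: "G > 0" using B by (simp add: G_def)
  have "G powr p' = B" using B p' by (simp add: G_def powr_powr)
  then have Gb: "(\<integral>\<^sup>+ z. ennreal (g z powr p') \<partial>lebesgue) \<le> ennreal (G powr p')"
    using B by (simp add: p'_def)
  have "(\<integral>\<^sup>+ z. ennreal (f z * g z) \<partial>lebesgue) \<le> ennreal (F * G)"
    by (rule nn_integral_Holder_le[OF p p' pq fm f0 gm g0 F(1) Fb G Gb])
  moreover have "(\<integral>\<^sup>+ z\<in>E. ennreal (g z * \<bar>\<omega> z\<bar>) \<partial>lebesgue) = (\<integral>\<^sup>+ z. ennreal (f z * g z) \<partial>lebesgue)"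
    unfolding fE by (intro nn_integral_cong) (auto split: split_indicator simp: mult.commute)
  moreover have "1/p' = (p-1)/p" by (simp add: p'_def)
  ultimately show ?thesis by (simp add: G_def)
qed

section \<open>Integrals of negative powers over level sets\<close>

lemma ex_dyadic_interval:
  assumes "1 \<le> (t::real)" shows "\<exists>k::nat. 2^k \<le> t \<and> t < 2^(k+1)"
proof -
  obtain n where n: "t < (2::real)^n" using real_arch_pow[of 2 t] by auto
  define m where "m = (LEAST n. t < (2::real)^n)"
  have m: "t < 2^m" unfolding m_def by (rule LeastI[of _ n]) (rule n)
  have "m \<noteq> 0" proof assume "m = 0" with m assms show False by simp qed
  then obtain k where k: "m = Suc k" by (cases m) auto
  have "\<not> t < 2^k" proof
    assume "t < 2^k" then have "m \<le> k" unfolding m_def by (rule Least_le)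
    with k show False by simp
  qed
  then show ?thesis using m k by (intro exI[of _ k]) auto
qed

lemma ex_dyadic_interval':
  assumes "1 < (t::real)" shows "\<exists>k::nat. 2^k < t \<and> t \<le> 2^(k+1)"
proof -
  obtain n where n: "t \<le> (2::real)^n" using real_arch_pow[of 2 t] by (auto intro: less_imp_le)
  define m where "m = (LEAST n. t \<le> (2::real)^n)"
  have m: "t \<le> 2^m" unfolding m_def by (rule LeastI[of _ n]) (rule n)
  have "m \<noteq> 0" proof assume "m = 0" with m assms show False by simp qed
  then obtain k where k: "m = Suc k" by (cases m) auto
  have "\<not> t \<le> 2^k" proof
    assume "t \<le> 2^k" then have "m \<le> k" unfolding m_def by (rule Least_le)
    with k show False by simp
  qed
  then show ?thesis using m k by (intro exI[of _ k]) auto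
qed

lemma nn_integral_le_suminf_shells:
  fixes h c :: "_ \<Rightarrow> real"
  assumes E: "\<And>k. E k \<in> sets M" and c: "\<And>k. c k \<ge> 0"
    and h: "\<And>z. z \<in> S \<Longrightarrow> 0 \<le> h z \<and> (h z = 0 \<or> (\<exists>k. z \<in> E k \<and> h z \<le> c k))"
  shows "(\<integral>\<^sup>+ z\<in>S. ennreal (h z) \<partial>M) \<le> (\<Sum>k. ennreal (c k) * emeasure M (E k))"
proof -
  have le_suminf: "f k \<le> suminf f" for f :: "nat \<Rightarrow> ennreal" and k
    using sum_le_suminf[of f "{k}"] by simp
  have "(\<integral>\<^sup>+ z\<in>S. ennreal (h z) \<partial>M) \<le> (\<integral>\<^sup>+ z. (\<Sum>k. ennreal (c k) * indicator (E k) z) \<partial>M)"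
  proof (intro nn_integral_mono)
    fix z
    show "ennreal (h z) * indicator S z \<le> (\<Sum>k. ennreal (c k) * indicator (E k) z)"
    proof (cases "z \<in> S")
      case True
      from h[OF True] show ?thesis
      proof (elim conjE disjE exE)
        fix k assume k: "z \<in> E k" "h z \<le> c k"
        have "ennreal (h z) * indicator S z \<le> ennreal (c k) * indicator (E k) z"
          using k True by (auto intro: ennreal_leI)
        also have "\<dots> \<le> (\<Sum>k. ennreal (c k) * indicator (E k) z)" by (rule le_suminf)
        finally show ?thesis .
      qed simp
    qed simp
  qed
  also have "\<dots> = (\<Sum>k. (\<integral>\<^sup>+ z. ennreal (c k) * indicator (E k) z \<partial>M))"
    by (rule nn_integral_suminf) (use E in auto)
  also have "\<dots> = (\<Sum>k. ennreal (c k) * emeasure M (E k))"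
    using E by (simp add: nn_integral_cmult_indicator)
  finally show ?thesis .
qed

lemma powr_two_minus: "(h::real) > 0 \<Longrightarrow> h powr (2-s) = h^2 * h powr (-s)"
proof -
  assume h: "h > 0"
  have "h powr (2 + -s) = h powr 2 * h powr (-s)" by (rule powr_add)
  also have "h powr 2 = h^2" using h by (intro powr_numeral) simp
  finally show ?thesis by (simp only: diff_conv_add_uminus)
qed

lemma powr_mult_two_powr_power:
  "(\<rho>::real) > 0 \<Longrightarrow> (\<rho> * 2 powr (t * real k)) powr e = \<rho> powr e * (2 powr (t*e))^k"
  by (simp add: powr_mult powr_powr powr_realpow[symmetric] mult_ac)

definition sublevel_const :: "real \<Rightarrow> real" where
  "sublevel_const s = 2 powr s / (1 - 2 powr (s - 2))"

definition superlevel_const :: "real \<Rightarrow> real" where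
  "superlevel_const s = 4 / (1 - 2 powr (2 - s))"

lemma sublevel_const_pos: "s < 2 \<Longrightarrow> sublevel_const s > 0"
  unfolding sublevel_const_def using powr_less_mono[of "s - 2" 0 "2::real"] by (auto intro!: divide_pos_pos)

lemma superlevel_const_pos: "2 < s \<Longrightarrow> superlevel_const s > 0"
  unfolding superlevel_const_def using powr_less_mono[of "2 - s" 0 "2::real"] by (auto intro!: divide_pos_pos)

locale quadratic_sublevel_growth =
  fixes M :: "'a measure" and S :: "'a set" and a :: "'a \<Rightarrow> real" and A :: real
  assumes S: "S \<in> sets M" and am: "a \<in> borel_measurable M" and a0: "\<And>z. a z \<ge> 0"
    and mb: "\<And>r. r > 0 \<Longrightarrow> emeasure M {z \<in> S. a z < r} \<le> ennreal (A * r^2)"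
    and A: "A \<ge> 0"
begin

lemma nn_integral_powr_le_shells:
  assumes s: "0 \<le> s" and lo: "\<And>k. lo k > 0" and sm: "summable (\<lambda>k. lo k powr (2-s))"
    and cover: "\<And>z. z \<in> S \<Longrightarrow> z \<in> X \<Longrightarrow> 0 < a z \<Longrightarrow> \<exists>k. lo k \<le> a z \<and> a z < 2 * lo k"
  shows "(\<integral>\<^sup>+ z\<in>S. ennreal (indicator X z * a z powr (-s)) \<partial>M)
     \<le> ennreal (4 * A * (\<Sum>k. lo k powr (2-s)))"
proof -
  define E where "E k = {z \<in> S. lo k \<le> a z \<and> a z < 2 * lo k}" for k
  have Em: "E k \<in> sets M" for k unfolding E_def using S am by measurable
  have "(\<integral>\<^sup>+ z\<in>S. ennreal (indicator X z * a z powr (-s)) \<partial>M)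
      \<le> (\<Sum>k. ennreal (lo k powr (-s)) * emeasure M (E k))"
  proof (rule nn_integral_le_suminf_shells[OF Em])
    fix z assume z: "z \<in> S"
    show "0 \<le> indicator X z * a z powr (-s) \<and> (indicator X z * a z powr (-s) = 0 \<or>
      (\<exists>k. z \<in> E k \<and> indicator X z * a z powr (-s) \<le> lo k powr (-s)))"
    proof (cases "z \<in> X \<and> 0 < a z")
      case True
      then obtain k where k: "lo k \<le> a z" "a z < 2 * lo k" using cover z by blast
      have "a z powr (-s) \<le> lo k powr (-s)" by (rule powr_mono2') (use s lo[of k] k in auto)
      then show ?thesis using True z k by (auto simp: E_def)
    qed (use a0[of z] in \<open>auto simp: indicator_def\<close>)
  qed simp
  also have "\<dots> \<le> (\<Sum>k. ennreal (4 * A * lo k powr (2-s)))"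
  proof (intro suminf_le)
    fix k
    have "emeasure M (E k) \<le> emeasure M {z \<in> S. a z < 2 * lo k}"
      by (rule emeasure_mono) (use S am in \<open>auto simp: E_def\<close>)
    also have "\<dots> \<le> ennreal (A * (2 * lo k)^2)" by (rule mb) (use lo[of k] in simp)
    finally have "ennreal (lo k powr (-s)) * emeasure M (E k) \<le> ennreal (lo k powr (-s) * (A * (2 * lo k)^2))"
      using A by (simp add: ennreal_mult mult_left_mono)
    also have "lo k powr (-s) * (A * (2 * lo k)^2) = 4 * A * lo k powr (2-s)"
      using powr_two_minus[OF lo[of k], of s] by (simp add: power_mult_distrib mult_ac)
    finally show "ennreal (lo k powr (-s)) * emeasure M (E k) \<le> ennreal (4 * A * lo k powr (2-s))" .
  qed auto
  also have "\<dots> = ennreal (\<Sum>k. 4 * A * lo k powr (2-s))"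
    by (rule suminf_ennreal2) (use A sm in \<open>auto intro: summable_mult\<close>)
  also have "(\<Sum>k. 4 * A * lo k powr (2-s)) = 4 * A * (\<Sum>k. lo k powr (2-s))"
    by (rule suminf_mult[OF sm])
  finally show ?thesis .
qed

lemma nn_integral_sublevel_powr_le:
  assumes s: "0 < s" "s < 2" and r: "\<rho> > 0"
  shows "(\<integral>\<^sup>+ z\<in>S. ennreal (indicator {z. a z < \<rho>} z * a z powr (-s)) \<partial>M)
     \<le> ennreal (A * sublevel_const s * \<rho> powr (2-s))"
proof -
  define x where "x = (2::real) powr (s - 2)"
  have x: "0 \<le> x" "x < 1" using s powr_less_mono[of "s - 2" 0 "2::real"] by (auto simp: x_def)
  define lo where "lo k = \<rho> / 2 * 2 powr (-1 * real k)" for k :: nat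
  have "(2::real) powr (-1 * real k) = 1 / 2^k" for k
    by (simp add: powr_minus powr_realpow divide_inverse)
  then have lok: "lo k = \<rho> / 2^(k+1)" for k
    unfolding lo_def by simp
  have geom: "lo k powr (2-s) = (\<rho> / 2) powr (2-s) * x^k" for k
    unfolding lo_def x_def using powr_mult_two_powr_power[of "\<rho>/2" "-1" k "2-s"] r by simp
  have "(\<integral>\<^sup>+ z\<in>S. ennreal (indicator {z. a z < \<rho>} z * a z powr (-s)) \<partial>M)
     \<le> ennreal (4 * A * (\<Sum>k. lo k powr (2-s)))"
  proof (rule nn_integral_powr_le_shells)
    show "summable (\<lambda>k. lo k powr (2-s))"
      unfolding geom using x by (intro summable_mult summable_geometric) auto
    fix z assume "z \<in> {z. a z < \<rho>}" and az: "0 < a z"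
    then obtain k where k: "2^k < \<rho> / a z" "\<rho> / a z \<le> 2^(k+1)"
      using ex_dyadic_interval'[of "\<rho> / a z"] by auto
    then show "\<exists>k. lo k \<le> a z \<and> a z < 2 * lo k"
      using az by (intro exI[of _ k]) (auto simp: lok field_simps)
  qed (use s r in \<open>auto simp: lok\<close>)
  also have "(\<Sum>k. lo k powr (2-s)) = (\<rho> / 2) powr (2-s) * (1 / (1 - x))"
    unfolding geom using x by (subst suminf_mult) (auto intro: summable_geometric simp: suminf_geometric)
  also have "(\<rho> / 2) powr (2-s) = \<rho> powr (2-s) * 2 powr s / 4"
  proof -
    have "(2::real) powr (2-s) = 2 powr 2 / 2 powr s" by (rule powr_diff)
    then show ?thesis by (simp add: powr_divide)
  qed
  also have "4 * A * (\<rho> powr (2-s) * 2 powr s / 4 * (1 / (1 - x))) = A * sublevel_const s * \<rho> powr (2-s)"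
    using x unfolding sublevel_const_def x_def by (simp add: divide_simps)
  finally show ?thesis .
qed

lemma nn_integral_superlevel_powr_le:
  assumes s: "2 < s" and r: "\<rho> > 0"
  shows "(\<integral>\<^sup>+ z\<in>S. ennreal (indicator {z. \<rho> \<le> a z} z * a z powr (-s)) \<partial>M)
     \<le> ennreal (A * superlevel_const s * \<rho> powr (2-s))"
proof -
  define x where "x = (2::real) powr (2 - s)"
  have x: "0 \<le> x" "x < 1" using s powr_less_mono[of "2 - s" 0 "2::real"] by (auto simp: x_def)
  define lo where "lo k = \<rho> * 2 powr (1 * real k)" for k :: nat
  have lok: "lo k = \<rho> * 2^k" for k unfolding lo_def by (simp add: powr_realpow)
  have geom: "lo k powr (2-s) = \<rho> powr (2-s) * x^k" for k
    unfolding lo_def x_def using powr_mult_two_powr_power[of \<rho> 1 k "2-s"] r by simp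
  have "(\<integral>\<^sup>+ z\<in>S. ennreal (indicator {z. \<rho> \<le> a z} z * a z powr (-s)) \<partial>M)
     \<le> ennreal (4 * A * (\<Sum>k. lo k powr (2-s)))"
  proof (rule nn_integral_powr_le_shells)
    show "summable (\<lambda>k. lo k powr (2-s))"
      unfolding geom using x by (intro summable_mult summable_geometric) auto
    fix z assume "z \<in> {z. \<rho> \<le> a z}"
    then obtain k where k: "2^k \<le> a z / \<rho>" "a z / \<rho> < 2^(k+1)"
      using ex_dyadic_interval[of "a z / \<rho>"] r by auto
    then show "\<exists>k. lo k \<le> a z \<and> a z < 2 * lo k"
      using r by (intro exI[of _ k]) (auto simp: lok field_simps)
  qed (use s r in \<open>auto simp: lok\<close>)
  also have "(\<Sum>k. lo k powr (2-s)) = \<rho> powr (2-s) * (1 / (1 - x))"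
    unfolding geom using x by (subst suminf_mult) (auto intro: summable_geometric simp: suminf_geometric)
  also have "4 * A * (\<rho> powr (2-s) * (1 / (1 - x))) = A * superlevel_const s * \<rho> powr (2-s)"
    using x unfolding superlevel_const_def x_def by (simp add: field_simps)
  finally show ?thesis .
qed

end

section \<open>Bounds on the constants\<close>

lemma inverse_one_minus_two_powr_le:
  assumes t: "(t::real) > 0" shows "1 / (1 - 2 powr (-t)) \<le> 1 + 2/t"
proof -
  define u where "u = t * ln 2"
  have l2: "ln (2::real) \<ge> 1/2" using ln2_ge_two_thirds by simp
  have u: "u > 0" "u \<ge> t/2" using t l2 by (auto simp: u_def)
  have e: "2 powr (-t) = exp (-u)" by (simp add: powr_def u_def)
  have "exp u \<ge> 1 + u" by (rule exp_ge_add_one_self)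
  then have "exp (-u) \<le> 1/(1+u)" using u by (simp add: exp_minus field_simps)
  then have "1 - exp (-u) \<ge> u/(1+u)" using u by (simp add: field_simps)
  then have "1 / (1 - exp (-u)) \<le> 1 / (u/(1+u))" using u by (intro divide_left_mono) auto
  also have "\<dots> = 1 + 1/u" using u by (simp add: field_simps)
  also have "1/u \<le> 2/t" using u t by (simp add: field_simps)
  finally show ?thesis unfolding e by simp
qed

lemma powr_le_one_plus: "(X::real) \<ge> 0 \<Longrightarrow> 0 \<le> \<theta> \<Longrightarrow> \<theta> \<le> 1 \<Longrightarrow> X powr \<theta> \<le> 1 + X"
proof -
  assume X: "X \<ge> 0" and th: "0 \<le> \<theta>" "\<theta> \<le> 1"
  show ?thesis
  proof (cases "X \<le> 1")
    case True
    then have "X powr \<theta> \<le> 1" using X th by (simp add: powr_le1)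
    then show ?thesis using X by linarith
  next
    case False
    then have "X powr \<theta> \<le> X powr 1" using th by (intro powr_mono) auto
    then show ?thesis using X by simp
  qed
qed

lemma sublevel_const_bound:
  assumes p: "2 < p" shows "36 * sublevel_const (p/(p-1)) \<le> 720 * max 1 (1/(p-2))"
proof -
  define p' where "p' = p/(p-1)"
  have p': "1 < p'" "p' < 2" using p by (auto simp: p'_def field_simps)
  have t: "2 - p' > 0" using p' by simp
  have g: "1 / (1 - 2 powr (-(2-p'))) \<le> 1 + 2/(2-p')" by (rule inverse_one_minus_two_powr_le[OF t])
  have e: "2/(2-p') = 2 + 2/(p-2)" using p by (simp add: p'_def field_simps)
  have M: "1/(p-2) \<le> max 1 (1/(p-2))" "1 \<le> max 1 (1/(p-2))" by auto
  have tw: "2 powr p' \<le> (4::real)"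
    using powr_mono[of p' 2 "2::real"] p' by simp
  have pos: "1 - 2 powr (-(2-p')) > 0" using powr_less_mono[of "-(2-p')" 0 "2::real"] t by simp
  have "sublevel_const p' = 2 powr p' * (1 / (1 - 2 powr (-(2-p'))))"
    unfolding sublevel_const_def minus_diff_eq by simp
  also have "\<dots> \<le> 4 * (1 + 2/(2-p'))"
    using tw g pos by (intro mult_mono) auto
  finally have "sublevel_const p' \<le> 4 * (3 + 2/(p-2))" unfolding e by simp
  then have "36 * sublevel_const p' \<le> 36 * (4 * (3 + 2/(p-2)))" by simp
  also have "\<dots> \<le> 720 * max 1 (1/(p-2))" using M by simp
  finally show ?thesis by (simp add: p'_def)
qed

lemma superlevel_const_bound:
  assumes p: "2 < p" shows "36 * superlevel_const (2 * (p/(p-1))) \<le> 144 * p"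
proof -
  define p' where "p' = p/(p-1)"
  have p': "1 < p'" using p by (auto simp: p'_def field_simps)
  have t: "2*p' - 2 > 0" using p' by simp
  have g: "1 / (1 - 2 powr (-(2*p'-2))) \<le> 1 + 2/(2*p'-2)" by (rule inverse_one_minus_two_powr_le[OF t])
  have e: "2/(2*p'-2) = p - 1" using p by (simp add: p'_def field_simps)
  have "superlevel_const (2*p') = 4 * (1 / (1 - 2 powr (-(2*p'-2))))"
    unfolding superlevel_const_def minus_diff_eq by simp
  also have "\<dots> \<le> 4 * (1 + 2/(2*p'-2))" using g by simp
  finally have "superlevel_const (2*p') \<le> 4 * p" unfolding e by simp
  then show ?thesis by (simp add: p'_def)
qed

lemma near_factor_bound:
  assumes p: "2 < p" and r: "0 < r"
  shows "(36 * sublevel_const (p/(p-1)) * (2*r) powr (2 - p/(p-1))) powr ((p-1)/p)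
    \<le> 1442 * max 1 (1/(p-2)) * r powr (1 - 2/p)"
proof -
  define p' where "p' = p/(p-1)"
  have p': "1 < p'" "p' < 2" using p by (auto simp: p'_def field_simps)
  define X where "X = 36 * sublevel_const p'"
  have X0: "X \<ge> 0" using sublevel_const_pos[of p'] p' by (simp add: X_def)
  define \<theta> where "\<theta> = (p-1)/p"
  have th: "0 \<le> \<theta>" "\<theta> \<le> 1" using p by (auto simp: \<theta>_def)
  have ex: "(2 - p') * \<theta> = 1 - 2/p" using p by (simp add: p'_def \<theta>_def field_simps)
  have e1: "1 - 2/p \<le> 1" using p by simp
  have "(X * (2*r) powr (2 - p')) powr \<theta> = X powr \<theta> * ((2*r) powr (2-p')) powr \<theta>"
    using X0 by (simp add: powr_mult)
  also have "((2*r) powr (2-p')) powr \<theta> = (2*r) powr (1 - 2/p)" by (simp add: powr_powr ex)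
  also have "\<dots> = 2 powr (1 - 2/p) * r powr (1 - 2/p)" using r by (simp add: powr_mult)
  also have "X powr \<theta> * (2 powr (1 - 2/p) * r powr (1 - 2/p)) \<le> (721 * max 1 (1/(p-2))) * (2 * r powr (1 - 2/p))"
  proof (rule mult_mono)
    have "X powr \<theta> \<le> 1 + X" by (rule powr_le_one_plus[OF X0 th])
    also have "\<dots> \<le> 721 * max 1 (1/(p-2))" using sublevel_const_bound[OF p] unfolding X_def p'_def by simp
    finally show "X powr \<theta> \<le> 721 * max 1 (1/(p-2))" .
    have "2 powr (1 - 2/p) \<le> (2::real) powr 1" using e1 by (intro powr_mono) auto
    then show "2 powr (1 - 2/p) * r powr (1 - 2/p) \<le> 2 * r powr (1 - 2/p)"
      by (intro mult_right_mono) auto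
  qed auto
  finally show ?thesis by (simp add: X_def p'_def \<theta>_def)
qed

lemma near_const_factor_bound:
  assumes p: "2 < p"
  shows "(36 * sublevel_const (p/(p-1))) powr ((p-1)/p) \<le> 721 * max 1 (1/(p-2))"
proof -
  have X0: "36 * sublevel_const (p/(p-1)) \<ge> 0" using sublevel_const_pos[of "p/(p-1)"] p by (auto simp: field_simps)
  have "(36 * sublevel_const (p/(p-1))) powr ((p-1)/p) \<le> 1 + 36 * sublevel_const (p/(p-1))"
    by (rule powr_le_one_plus[OF X0]) (use p in auto)
  also have "\<dots> \<le> 721 * max 1 (1/(p-2))" using sublevel_const_bound[OF p] by simp
  finally show ?thesis .
qed

lemma annulus_factor_bound:
  assumes p: "2 < p" and r: "0 < r"
  shows "r * (36 * superlevel_const (2*(p/(p-1))) * (2*r) powr (2 - 2*(p/(p-1)))) powr ((p-1)/p)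
    \<le> 145 * p * r powr (1 - 2/p)"
proof -
  define p' where "p' = p/(p-1)"
  have p': "1 < p'" using p by (auto simp: p'_def field_simps)
  define X where "X = 36 * superlevel_const (2*p')"
  have X0: "X \<ge> 0" using superlevel_const_pos[of "2*p'"] p' by (simp add: X_def)
  define \<theta> where "\<theta> = (p-1)/p"
  have th: "0 \<le> \<theta>" "\<theta> \<le> 1" using p by (auto simp: \<theta>_def)
  have ex: "(2 - 2*p') * \<theta> = -(2/p)" using p by (simp add: p'_def \<theta>_def field_simps)
  have "(X * (2*r) powr (2 - 2*p')) powr \<theta> = X powr \<theta> * ((2*r) powr (2-2*p')) powr \<theta>"
    using X0 by (simp add: powr_mult)
  also have "((2*r) powr (2-2*p')) powr \<theta> = (2*r) powr (-(2/p))" by (simp add: powr_powr ex)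
  also have "X powr \<theta> * (2*r) powr (-(2/p)) \<le> (145 * p) * r powr (-(2/p))"
  proof (intro mult_mono)
    have "X powr \<theta> \<le> 1 + X" by (rule powr_le_one_plus[OF X0 th])
    also have "\<dots> \<le> 145 * p" using superlevel_const_bound[OF p] p unfolding X_def p'_def by simp
    finally show "X powr \<theta> \<le> 145 * p" .
    show "(2*r) powr (-(2/p)) \<le> r powr (-(2/p))" by (rule powr_mono2') (use p r in auto)
  qed (use p in auto)
  finally have "(X * (2*r) powr (2 - 2*p')) powr \<theta> \<le> 145 * p * r powr (-(2/p))" .
  then have "r * (X * (2*r) powr (2 - 2*p')) powr \<theta> \<le> r * (145 * p * r powr (-(2/p)))"
    using r by (intro mult_left_mono) auto
  also have "r * (145 * p * r powr (-(2/p))) = 145 * p * (r * r powr (-(2/p)))" by (simp only: mult_ac)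
  also have "r * r powr (-(2/p)) = r powr (1 - 2/p)"
  proof -
    have "r powr (1 + -(2/p)) = r powr 1 * r powr (-(2/p))" by (rule powr_add)
    then show ?thesis using r by simp
  qed
  finally show ?thesis by (simp add: X_def p'_def \<theta>_def)
qed

lemma near_field_terms_le:
  fixes U N M R T1 T2 K :: real
  assumes U0: "U \<ge> 0" and N0: "N \<ge> 0" and M1: "M \<ge> 1" and p: "1 \<le> p" and R0: "R \<ge> 0"
    and K0: "K \<ge> 0"
    and t1: "T1 \<le> 1442 * M * R" and t2: "r * T2 \<le> 145 * p * R" and rR: "r \<le> R"
  shows "2*\<bar>C1\<bar> * (U * T1) + \<bar>C2\<bar>*r * (U * T2) + \<bar>C2\<bar>*r * (N * K)
    \<le> (2884*\<bar>C1\<bar> + 145*\<bar>C2\<bar> + \<bar>C2\<bar> * K) * (M * (U + N) * (p * R))"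
proof -
  define W where "W = M * (U + N) * (p * R)"
  have Mp: "1 \<le> M * p" "M \<le> M * p" "p \<le> M * p"
    using M1 p mult_mono[of 1 M 1 p] by (simp_all add: mult_le_cancel_left1 mult_le_cancel_right1)
  have "U * M \<le> (U + N) * (M * p)" using U0 N0 M1 Mp(2) by (intro mult_mono) auto
  moreover have "U * p \<le> (U + N) * (M * p)" using U0 N0 p Mp(3) by (intro mult_mono) auto
  moreover have "N \<le> (U + N) * (M * p)" using U0 N0 Mp(1) mult_mono[of N "U + N" 1 "M * p"] by simp
  ultimately have UW: "U * M * R \<le> W" "U * p * R \<le> W" "N * R \<le> W"
    using R0 unfolding W_def by (auto dest: mult_right_mono[of _ _ R] simp: mult_ac)
  have "2*\<bar>C1\<bar> * (U * T1) \<le> 2884*\<bar>C1\<bar> * (U * M * R)"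
    using U0 t1 mult_left_mono[of T1 "1442 * M * R" "2 * \<bar>C1\<bar> * U"] by (simp add: mult_ac)
  also have "\<dots> \<le> 2884*\<bar>C1\<bar> * W" using UW(1) by (intro mult_left_mono) auto
  finally have a1: "2*\<bar>C1\<bar> * (U * T1) \<le> 2884*\<bar>C1\<bar> * W" .
  have "\<bar>C2\<bar>*r * (U * T2) \<le> 145*\<bar>C2\<bar> * (U * p * R)"
    using U0 t2 mult_left_mono[of "r * T2" "145 * p * R" "\<bar>C2\<bar> * U"] by (simp add: mult_ac)
  also have "\<dots> \<le> 145*\<bar>C2\<bar> * W" using UW(2) by (intro mult_left_mono) auto
  finally have a2: "\<bar>C2\<bar>*r * (U * T2) \<le> 145*\<bar>C2\<bar> * W" .
  have "\<bar>C2\<bar>*r * (N * K) \<le> \<bar>C2\<bar> * K * (N * R)"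
    using N0 K0 rR mult_left_mono[of r R "\<bar>C2\<bar> * K * N"] by (simp add: mult_ac)
  also have "\<dots> \<le> \<bar>C2\<bar> * K * W" using UW(3) K0 by (intro mult_left_mono) auto
  finally have a3: "\<bar>C2\<bar>*r * (N * K) \<le> \<bar>C2\<bar> * K * W" .
  show ?thesis using a1 a2 a3 unfolding W_def[symmetric] by (simp add: algebra_simps)
qed

lemma far_field_terms_le:
  fixes U N M K X :: real
  assumes U0: "U \<ge> 0" and N0: "N \<ge> 0" and M1: "M \<ge> 1" and K0: "K \<ge> 0" and X: "X \<le> 721 * M"
  shows "U * X + N * K \<le> (721 + K) * (M * (U + N))"
proof -
  have "U * X \<le> 721 * (M * U)" using U0 X mult_left_mono[of X "721 * M" U] by (simp add: mult_ac)
  moreover have "N * K \<le> K * (M * N)" using N0 K0 M1 mult_left_mono[of 1 M "K * N"] by (simp add: mult_ac)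
  moreover have "0 \<le> 721 * (M * N)" "0 \<le> K * (M * U)" using U0 N0 M1 K0 by simp_all
  ultimately show ?thesis by (simp add: algebra_simps)
qed

definition far_field_const :: "real \<Rightarrow> real" where
  "far_field_const q = (if q = 1 then 1 else (36 * superlevel_const (q/(q-1))) powr ((q-1)/q))"

lemma far_field_const_nonneg: "far_field_const q \<ge> 0"
  by (simp add: far_field_const_def)

section \<open>The kernel profile\<close>

definition kernel_profile :: "real \<Rightarrow> real \<Rightarrow> real \<Rightarrow> real \<Rightarrow> real" where
  "kernel_profile C1 C2 r t = (if t < 2*r then 2 * \<bar>C1\<bar> / t else \<bar>C2\<bar> * r / t^2)"

lemma kernel_profile_nonneg: "0 \<le> t \<Longrightarrow> 0 \<le> r \<Longrightarrow> 0 \<le> kernel_profile C1 C2 r t"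
  by (simp add: kernel_profile_def)

lemma le_kernel_profile_add:
  fixes a b r N n1 n2 C1 C2 :: real
  assumes a: "a > 0" and b: "b > 0" and r: "r > 0"
    and K1a: "n1 \<le> C1 / a" and K1b: "n2 \<le> C1 / b" and tri: "N \<le> n1 + n2"
    and K2: "N \<le> C2 * r / (a * b)"
  shows "N \<le> kernel_profile C1 C2 r a + kernel_profile C1 C2 r b"
proof -
  have P0: "0 \<le> kernel_profile C1 C2 r a" "0 \<le> kernel_profile C1 C2 r b"
    using a b r by (simp_all add: kernel_profile_nonneg)
  have N1: "N \<le> \<bar>C1\<bar> / a + \<bar>C1\<bar> / b"
    using a b K1a K1b tri divide_right_mono[of C1 "\<bar>C1\<bar>"] by (smt (verit))
  consider "a < 2*r" "a \<le> b" | "b < 2*r" "b \<le> a" | "2*r \<le> a" "2*r \<le> b" by linarith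
  then show ?thesis
  proof cases
    case 1
    have "\<bar>C1\<bar> / b \<le> \<bar>C1\<bar> / a" using 1 a by (intro divide_left_mono) auto
    then show ?thesis using N1 P0 1 by (simp add: kernel_profile_def)
  next
    case 2
    have "\<bar>C1\<bar> / a \<le> \<bar>C1\<bar> / b" using 2 b by (intro divide_left_mono) auto
    then show ?thesis using N1 P0 2 by (simp add: kernel_profile_def)
  next
    case 3
    \<comment> \<open>2/(ab) \<le> 1/a^2 + 1/b^2 is (1/a - 1/b)^2 \<ge> 0\<close>
    have "2 / (a*b) \<le> 1/a^2 + 1/b^2"
      using a b sum_squares_ge_zero[of "1/a - 1/b" 0] by (simp add: power2_eq_square field_simps)
    moreover have "1 / (a*b) \<le> 2 / (a*b)" using a b by (simp add: divide_right_mono)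
    ultimately have "1 / (a*b) \<le> 1/a^2 + 1/b^2" by linarith
    then have "\<bar>C2\<bar> * r * (1 / (a*b)) \<le> \<bar>C2\<bar> * r * (1/a^2 + 1/b^2)"
      using r by (intro mult_left_mono) auto
    moreover have "C2 * r / (a * b) \<le> \<bar>C2\<bar> * r * (1 / (a*b))"
      using a b r by (simp add: divide_right_mono mult_right_mono)
    ultimately show ?thesis using K2 3 by (simp add: kernel_profile_def algebra_simps)
  qed
qed

lemma norm_kernel_diff_le_profiles:
  assumes K: "kernel_K1K2 S d k C1 C2" and xyz: "x \<in> S" "y \<in> S" "z \<in> S" "z \<noteq> x" "z \<noteq> y"
    and r: "d x y > 0" and a0: "d x z \<ge> 0" and b0: "d y z \<ge> 0"
  shows "norm (k x z - k y z) \<le> kernel_profile C1 C2 (d x y) (d x z) + kernel_profile C1 C2 (d x y) (d y z)"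
proof -
  have K2: "norm (k x z - k y z) \<le> C2 * d x y / (d x z * d y z)"
    using K xyz unfolding kernel_K1K2_def by blast
  show ?thesis
  proof (cases "d x z = 0 \<or> d y z = 0")
    case True
    then have "norm (k x z - k y z) \<le> 0" using K2 by auto
    moreover have "0 \<le> kernel_profile C1 C2 (d x y) (d x z) + kernel_profile C1 C2 (d x y) (d y z)"
      using kernel_profile_nonneg a0 b0 r by (simp add: add_nonneg_nonneg)
    ultimately show ?thesis by linarith
  next
    case False
    then have a: "d x z > 0" and b: "d y z > 0" using a0 b0 by auto
    have K1a: "norm (k x z) \<le> C1 / d x z" and K1b: "norm (k y z) \<le> C1 / d y z"
      using K xyz unfolding kernel_K1K2_def by (metis)+
    show ?thesis by (rule le_kernel_profile_add[OF a b r K1a K1b norm_triangle_ineq4 K2])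
  qed
qed

lemma powr_neg_one_eq: "0 \<le> (t::real) \<Longrightarrow> t powr (-1) = 1 / t"
  by (simp add: powr_minus_divide)

lemma powr_neg_two_eq: "0 \<le> (t::real) \<Longrightarrow> t powr (-2) = 1 / t^2"
  by (cases "t = 0") (simp_all add: powr_minus_divide powr_numeral)

lemma kernel_profile_le_split:
  assumes t: "0 \<le> (t::real)" and r: "0 < r"
  shows "kernel_profile C1 C2 r t \<le> 2*\<bar>C1\<bar> * (indicator {x. x < 2*r} t * t powr (-1))
     + \<bar>C2\<bar>*r * (indicator {x. 2*r \<le> x} t * indicator {x. x < 1} t * t powr (-2))
     + \<bar>C2\<bar>*r * (indicator {x. 1 \<le> x} t * t powr (-1))"
proof -
  consider "t < 2*r" | "2*r \<le> t" "t < 1" | "2*r \<le> t" "1 \<le> t" by linarith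
  then show ?thesis
  proof cases
    case 3
    then have "1 / t^2 \<le> 1 / t"
      by (intro divide_left_mono) (auto simp: power2_eq_square)
    then have "\<bar>C2\<bar> * r / t^2 \<le> \<bar>C2\<bar> * r * (1 / t)"
      using r mult_left_mono[of "1 / t^2" "1 / t" "\<bar>C2\<bar> * r"] by simp
    then show ?thesis using 3 r t by (simp add: kernel_profile_def powr_neg_one_eq)
  qed (use t r in \<open>simp_all add: kernel_profile_def powr_neg_one_eq powr_neg_two_eq\<close>)
qed

lemma kernel_profile_le_inv:
  assumes t: "0 \<le> (t::real)" and r: "1/2 < r"
  shows "kernel_profile C1 C2 r t \<le> (2*\<bar>C1\<bar> + \<bar>C2\<bar>) * t powr (-1)"
proof (cases "t < 2*r")
  case False
  then have tp: "t > 0" using r by simp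
  have "r / t^2 \<le> (t/2) / t^2" using False tp by (intro divide_right_mono) auto
  also have "\<dots> \<le> 1/t" using tp by (simp add: power2_eq_square field_simps)
  finally have "kernel_profile C1 C2 r t \<le> \<bar>C2\<bar> * (1/t)"
    using False mult_left_mono[of "r / t^2" "1/t" "\<bar>C2\<bar>"] by (simp add: kernel_profile_def)
  also have "\<dots> \<le> (2*\<bar>C1\<bar> + \<bar>C2\<bar>) * t powr (-1)"
    using tp by (simp add: powr_neg_one_eq divide_right_mono)
  finally show ?thesis .
next
  case True
  then show ?thesis using t by (simp add: kernel_profile_def powr_neg_one_eq divide_right_mono)
qed

section \<open>Integrals against a density\<close>

lemma nn_integral_le_linear_comb3:
  fixes h f1 f2 f3 :: "'a \<Rightarrow> real"
  assumes m1: "(\<lambda>z. ennreal (f1 z) * indicator S z) \<in> borel_measurable M"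
    and m2: "(\<lambda>z. ennreal (f2 z) * indicator S z) \<in> borel_measurable M"
    and m3: "(\<lambda>z. ennreal (f3 z) * indicator S z) \<in> borel_measurable M"
    and co: "\<alpha> \<ge> 0" "\<beta> \<ge> 0" "\<gamma> \<ge> 0"
    and f0: "\<And>z. f1 z \<ge> 0" "\<And>z. f2 z \<ge> 0" "\<And>z. f3 z \<ge> 0"
    and pw: "\<And>z. z \<in> S \<Longrightarrow> h z \<le> \<alpha> * f1 z + \<beta> * f2 z + \<gamma> * f3 z"
  shows "(\<integral>\<^sup>+ z\<in>S. ennreal (h z) \<partial>M) \<le> ennreal \<alpha> * (\<integral>\<^sup>+ z\<in>S. ennreal (f1 z) \<partial>M)
     + ennreal \<beta> * (\<integral>\<^sup>+ z\<in>S. ennreal (f2 z) \<partial>M) + ennreal \<gamma> * (\<integral>\<^sup>+ z\<in>S. ennreal (f3 z) \<partial>M)"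
proof -
  have "(\<integral>\<^sup>+ z\<in>S. ennreal (h z) \<partial>M) \<le> (\<integral>\<^sup>+ z. (ennreal \<alpha> * (ennreal (f1 z) * indicator S z)
      + ennreal \<beta> * (ennreal (f2 z) * indicator S z)) + ennreal \<gamma> * (ennreal (f3 z) * indicator S z) \<partial>M)"
  proof (intro nn_integral_mono)
    fix z
    show "ennreal (h z) * indicator S z \<le> (ennreal \<alpha> * (ennreal (f1 z) * indicator S z)
      + ennreal \<beta> * (ennreal (f2 z) * indicator S z)) + ennreal \<gamma> * (ennreal (f3 z) * indicator S z)"
    proof (cases "z \<in> S")
      case True
      have "ennreal (h z) \<le> ennreal (\<alpha> * f1 z + \<beta> * f2 z + \<gamma> * f3 z)" by (rule ennreal_leI[OF pw[OF True]])
      also have "\<dots> = ennreal \<alpha> * ennreal (f1 z) + ennreal \<beta> * ennreal (f2 z) + ennreal \<gamma> * ennreal (f3 z)"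
        using co f0 by (simp add: ennreal_plus ennreal_mult)
      finally show ?thesis using True by simp
    qed simp
  qed
  also have "\<dots> = (\<integral>\<^sup>+ z. ennreal \<alpha> * (ennreal (f1 z) * indicator S z)
      + ennreal \<beta> * (ennreal (f2 z) * indicator S z) \<partial>M) + (\<integral>\<^sup>+ z. ennreal \<gamma> * (ennreal (f3 z) * indicator S z) \<partial>M)"
    by (rule nn_integral_add) (use m1 m2 m3 in auto)
  also have "(\<integral>\<^sup>+ z. ennreal \<alpha> * (ennreal (f1 z) * indicator S z)
      + ennreal \<beta> * (ennreal (f2 z) * indicator S z) \<partial>M) = (\<integral>\<^sup>+ z. ennreal \<alpha> * (ennreal (f1 z) * indicator S z) \<partial>M)
      + (\<integral>\<^sup>+ z. ennreal \<beta> * (ennreal (f2 z) * indicator S z) \<partial>M)"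
    by (rule nn_integral_add) (use m1 m2 in auto)
  also have "(\<integral>\<^sup>+ z. ennreal \<alpha> * (ennreal (f1 z) * indicator S z) \<partial>M) = ennreal \<alpha> * (\<integral>\<^sup>+ z\<in>S. ennreal (f1 z) \<partial>M)"
    by (rule nn_integral_cmult[OF m1])
  also have "(\<integral>\<^sup>+ z. ennreal \<beta> * (ennreal (f2 z) * indicator S z) \<partial>M) = ennreal \<beta> * (\<integral>\<^sup>+ z\<in>S. ennreal (f2 z) \<partial>M)"
    by (rule nn_integral_cmult[OF m2])
  also have "(\<integral>\<^sup>+ z. ennreal \<gamma> * (ennreal (f3 z) * indicator S z) \<partial>M) = ennreal \<gamma> * (\<integral>\<^sup>+ z\<in>S. ennreal (f3 z) \<partial>M)"
    by (rule nn_integral_cmult[OF m3])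
  finally show ?thesis .
qed

locale area_growth_density =
  fixes S :: "pt set" and d :: "pt \<Rightarrow> pt \<Rightarrow> real" and \<omega> :: "pt \<Rightarrow> real"
  assumes area_growth: "quadratic_area_growth S d"
    and \<omega>m: "set_borel_measurable lebesgue S \<omega>"
begin

lemma S_sets: "S \<in> sets lebesgue"
  using area_growth by (simp add: quadratic_area_growth_def)

lemma dist_measurable: "c \<in> S \<Longrightarrow> d c \<in> borel_measurable lebesgue"
  using area_growth by (simp add: quadratic_area_growth_def)

lemma dist_nonneg: "c \<in> S \<Longrightarrow> d c z \<ge> 0"
  using area_growth by (simp add: quadratic_area_growth_def)

lemma sublevel_growth_at: "c \<in> S \<Longrightarrow> quadratic_sublevel_growth lebesgue S (d c) 36"
  using area_growth unfolding quadratic_area_growth_def by unfold_locales auto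

lemma measurable_density_product:
  assumes "f \<in> borel_measurable lebesgue"
  shows "(\<lambda>z. ennreal (f z * \<bar>\<omega> z\<bar>) * indicator S z) \<in> borel_measurable lebesgue"
proof -
  have "(\<lambda>z. ennreal (f z * \<bar>indicator S z *\<^sub>R \<omega> z\<bar>) * indicator S z) \<in> borel_measurable lebesgue"
    using \<omega>m[unfolded set_borel_measurable_def] assms S_sets by measurable
  then show ?thesis by (rule measurable_cong[THEN iffD1, rotated]) (auto split: split_indicator)
qed

lemma nn_integral_near_le:
  assumes ul: "memLp_ul p S d \<omega>" and p: "2 < p" and c: "c \<in> S" and r: "0 < \<rho>" "\<rho> \<le> 1"
  shows "(\<integral>\<^sup>+ z\<in>S. ennreal (indicator {z. d c z < \<rho>} z * d c z powr (-1) * \<bar>\<omega> z\<bar>) \<partial>lebesgue)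
    \<le> ennreal (ul_norm p S d \<omega> * (36 * sublevel_const (p/(p-1)) * \<rho> powr (2 - p/(p-1))) powr ((p-1)/p))"
proof -
  interpret quadratic_sublevel_growth lebesgue S "d c" 36 by (rule sublevel_growth_at[OF c])
  define p' where "p' = p/(p-1)"
  have p': "1 < p'" "p' < 2" using p by (auto simp: p'_def field_simps)
  define E where "E = {z \<in> S. d c z < \<rho>}"
  have Em: "E \<in> sets lebesgue" unfolding E_def using S_sets dist_measurable[OF c] by measurable
  have EB: "E \<subseteq> unit_ball S d c" using r by (auto simp: E_def unit_ball_def)
  have U0: "ul_norm p S d \<omega> \<ge> 0" by (rule ul_norm_nonneg[OF ul c])
  have U: "Lp_int p E \<omega> \<le> ennreal (ul_norm p S d \<omega> powr p)"
    by (rule Lp_int_le_ul_norm_powr[OF ul c _ EB]) (use p in auto)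
  define g where "g z = indicator S z * (indicator {z. d c z < \<rho>} z * d c z powr (-1))" for z
  have gm: "g \<in> borel_measurable lebesgue" unfolding g_def using S_sets dist_measurable[OF c] by measurable
  have g0: "g z \<ge> 0" for z by (simp add: g_def)
  have gp: "g z powr p' = indicator S z * (indicator {z. d c z < \<rho>} z * d c z powr (-p'))" for z
  proof (cases "d c z = 0")
    case False
    have e: "(d c z powr (-1)) powr p' = d c z powr (-p')" by (subst powr_powr) simp
    show ?thesis using e by (auto simp: g_def split: split_indicator)
  qed (auto simp: g_def split: split_indicator)
  define B where "B = 36 * sublevel_const p' * \<rho> powr (2 - p')"
  have B: "B > 0" using sublevel_const_pos[of p'] p' r by (simp add: B_def)
  have "(\<integral>\<^sup>+ z. ennreal (g z powr (p/(p-1))) \<partial>lebesgue)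
      = (\<integral>\<^sup>+ z\<in>S. ennreal (indicator {z. d c z < \<rho>} z * d c z powr (-p')) \<partial>lebesgue)"
    unfolding p'_def[symmetric] gp by (intro nn_integral_cong) (auto split: split_indicator)
  also have "\<dots> \<le> ennreal B" unfolding B_def using nn_integral_sublevel_powr_le[of p' \<rho>] p' r by (simp add: mult_ac)
  finally have Bb: "(\<integral>\<^sup>+ z. ennreal (g z powr (p/(p-1))) \<partial>lebesgue) \<le> ennreal B" .
  have "(\<integral>\<^sup>+ z\<in>E. ennreal (g z * \<bar>\<omega> z\<bar>) \<partial>lebesgue) \<le> ennreal (ul_norm p S d \<omega> * B powr ((p-1)/p))"
    by (rule nn_integral_Holder_Lp_int[OF _ Em _ \<omega>m U0 U gm g0 B Bb]) (use p in \<open>auto simp: E_def\<close>)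
  moreover have "(\<integral>\<^sup>+ z\<in>S. ennreal (indicator {z. d c z < \<rho>} z * d c z powr (-1) * \<bar>\<omega> z\<bar>) \<partial>lebesgue)
     = (\<integral>\<^sup>+ z\<in>E. ennreal (g z * \<bar>\<omega> z\<bar>) \<partial>lebesgue)"
    by (intro nn_integral_cong) (auto simp: g_def E_def split: split_indicator)
  ultimately show ?thesis by (simp add: B_def p'_def)
qed

lemma nn_integral_annulus_le:
  assumes ul: "memLp_ul p S d \<omega>" and p: "2 < p" and c: "c \<in> S" and r: "0 < \<rho>"
  shows "(\<integral>\<^sup>+ z\<in>S. ennreal (indicator {z. \<rho> \<le> d c z} z * indicator {z. d c z < 1} z * d c z powr (-2) * \<bar>\<omega> z\<bar>) \<partial>lebesgue)
    \<le> ennreal (ul_norm p S d \<omega> * (36 * superlevel_const (2 * (p/(p-1))) * \<rho> powr (2 - 2 * (p/(p-1)))) powr ((p-1)/p))"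
proof -
  interpret quadratic_sublevel_growth lebesgue S "d c" 36 by (rule sublevel_growth_at[OF c])
  define p' where "p' = p/(p-1)"
  have p': "1 < p'" using p by (auto simp: p'_def field_simps)
  define E where "E = {z \<in> S. d c z < 1}"
  have Em: "E \<in> sets lebesgue" unfolding E_def using S_sets dist_measurable[OF c] by measurable
  have EB: "E \<subseteq> unit_ball S d c" by (auto simp: E_def unit_ball_def)
  have U0: "ul_norm p S d \<omega> \<ge> 0" by (rule ul_norm_nonneg[OF ul c])
  have U: "Lp_int p E \<omega> \<le> ennreal (ul_norm p S d \<omega> powr p)"
    by (rule Lp_int_le_ul_norm_powr[OF ul c _ EB]) (use p in auto)
  define g where "g z = indicator S z * (indicator {z. \<rho> \<le> d c z} z * d c z powr (-2))" for z
  have gm: "g \<in> borel_measurable lebesgue" unfolding g_def using S_sets dist_measurable[OF c] by measurable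
  have g0: "g z \<ge> 0" for z by (simp add: g_def)
  have gp: "g z powr p' = indicator S z * (indicator {z. \<rho> \<le> d c z} z * d c z powr (-(2*p')))" for z
  proof (cases "\<rho> \<le> d c z")
    case True
    then have "d c z > 0" using r by simp
    then show ?thesis using p' by (auto simp: g_def powr_powr split: split_indicator)
  qed (auto simp: g_def split: split_indicator)
  define B where "B = 36 * superlevel_const (2*p') * \<rho> powr (2 - 2*p')"
  have B: "B > 0" using superlevel_const_pos[of "2*p'"] p' r by (simp add: B_def)
  have "(\<integral>\<^sup>+ z. ennreal (g z powr (p/(p-1))) \<partial>lebesgue)
      = (\<integral>\<^sup>+ z\<in>S. ennreal (indicator {z. \<rho> \<le> d c z} z * d c z powr (-(2*p'))) \<partial>lebesgue)"
    unfolding p'_def[symmetric] gp by (intro nn_integral_cong) (auto split: split_indicator)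
  also have "\<dots> \<le> ennreal B" unfolding B_def using nn_integral_superlevel_powr_le[of "2*p'" \<rho>] p' r by (simp add: mult_ac)
  finally have Bb: "(\<integral>\<^sup>+ z. ennreal (g z powr (p/(p-1))) \<partial>lebesgue) \<le> ennreal B" .
  have "(\<integral>\<^sup>+ z\<in>E. ennreal (g z * \<bar>\<omega> z\<bar>) \<partial>lebesgue) \<le> ennreal (ul_norm p S d \<omega> * B powr ((p-1)/p))"
    by (rule nn_integral_Holder_Lp_int[OF _ Em _ \<omega>m U0 U gm g0 B Bb]) (use p in \<open>auto simp: E_def\<close>)
  moreover have "(\<integral>\<^sup>+ z\<in>S. ennreal (indicator {z. \<rho> \<le> d c z} z * indicator {z. d c z < 1} z * d c z powr (-2) * \<bar>\<omega> z\<bar>) \<partial>lebesgue)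
     = (\<integral>\<^sup>+ z\<in>E. ennreal (g z * \<bar>\<omega> z\<bar>) \<partial>lebesgue)"
    by (intro nn_integral_cong) (auto simp: g_def E_def split: split_indicator)
  ultimately show ?thesis by (simp add: B_def p'_def)
qed

lemma nn_integral_far_le_L1:
  assumes mq: "memLp 1 S \<omega>" and c: "c \<in> S"
  shows "(\<integral>\<^sup>+ z\<in>S. ennreal (indicator {z. 1 \<le> d c z} z * d c z powr (-1) * \<bar>\<omega> z\<bar>) \<partial>lebesgue)
    \<le> ennreal (Lp_norm 1 S \<omega>)"
proof -
  have fin: "Lp_int 1 S \<omega> < \<infinity>" using mq by (simp add: memLp_def)
  have "(\<integral>\<^sup>+ z\<in>S. ennreal (indicator {z. 1 \<le> d c z} z * d c z powr (-1) * \<bar>\<omega> z\<bar>) \<partial>lebesgue)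
      \<le> (\<integral>\<^sup>+ z\<in>S. ennreal (\<bar>\<omega> z\<bar> powr 1) \<partial>lebesgue)"
  proof (intro nn_integral_mono)
    fix z
    have "indicator {z. 1 \<le> d c z} z * d c z powr (-1) \<le> (1::real)"
      by (auto split: split_indicator simp: powr_minus inverse_le_1_iff)
    then have "indicator {z. 1 \<le> d c z} z * d c z powr (-1) * \<bar>\<omega> z\<bar> \<le> 1 * \<bar>\<omega> z\<bar>"
      by (rule mult_right_mono) simp
    then have "indicator {z. 1 \<le> d c z} z * d c z powr (-1) * \<bar>\<omega> z\<bar> \<le> \<bar>\<omega> z\<bar>"
      by (simp only: mult_1_left)
    then show "ennreal (indicator {z. 1 \<le> d c z} z * d c z powr (-1) * \<bar>\<omega> z\<bar>) * indicator S z
      \<le> ennreal (\<bar>\<omega> z\<bar> powr 1) * indicator S z"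
      by (auto split: split_indicator intro: ennreal_leI)
  qed
  also have "\<dots> = ennreal (Lp_norm 1 S \<omega> powr 1)"
    using Lp_int_eq_Lp_norm_powr[OF fin] by (simp add: Lp_int_def)
  finally show ?thesis using Lp_norm_nonneg[of 1 S \<omega>] by simp
qed

lemma nn_integral_far_le_Lp:
  assumes q: "1 < q" "q < 2" and mq: "memLp q S \<omega>" and c: "c \<in> S"
  shows "(\<integral>\<^sup>+ z\<in>S. ennreal (indicator {z. 1 \<le> d c z} z * d c z powr (-1) * \<bar>\<omega> z\<bar>) \<partial>lebesgue)
    \<le> ennreal (Lp_norm q S \<omega> * (36 * superlevel_const (q/(q-1))) powr ((q-1)/q))"
proof -
  interpret quadratic_sublevel_growth lebesgue S "d c" 36 by (rule sublevel_growth_at[OF c])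
  define q' where "q' = q/(q-1)"
  have q': "2 < q'" using q by (auto simp: q'_def field_simps)
  have fin: "Lp_int q S \<omega> < \<infinity>" using mq by (simp add: memLp_def)
  have N: "Lp_int q S \<omega> = ennreal (Lp_norm q S \<omega> powr q)" using fin q by (intro Lp_int_eq_Lp_norm_powr) auto
  define g where "g z = indicator S z * (indicator {z. 1 \<le> d c z} z * d c z powr (-1))" for z
  have gm: "g \<in> borel_measurable lebesgue" unfolding g_def using S_sets dist_measurable[OF c] by measurable
  have g0: "g z \<ge> 0" for z by (simp add: g_def)
  have gp: "g z powr q' = indicator S z * (indicator {z. 1 \<le> d c z} z * d c z powr (-q'))" for z
  proof -
    have e: "(d c z powr (-1)) powr q' = d c z powr (-q')" by (subst powr_powr) simp
    show ?thesis using e by (auto simp: g_def split: split_indicator)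
  qed
  define B where "B = 36 * superlevel_const q'"
  have B: "B > 0" using superlevel_const_pos[of q'] q' by (simp add: B_def)
  have "(\<integral>\<^sup>+ z. ennreal (g z powr (q/(q-1))) \<partial>lebesgue)
      = (\<integral>\<^sup>+ z\<in>S. ennreal (indicator {z. 1 \<le> d c z} z * d c z powr (-q')) \<partial>lebesgue)"
    unfolding q'_def[symmetric] gp by (intro nn_integral_cong) (auto split: split_indicator)
  also have "\<dots> \<le> ennreal B" unfolding B_def using nn_integral_superlevel_powr_le[of q' 1] q' by (simp add: mult_ac)
  finally have Bb: "(\<integral>\<^sup>+ z. ennreal (g z powr (q/(q-1))) \<partial>lebesgue) \<le> ennreal B" .
  have "(\<integral>\<^sup>+ z\<in>S. ennreal (g z * \<bar>\<omega> z\<bar>) \<partial>lebesgue) \<le> ennreal (Lp_norm q S \<omega> * B powr ((q-1)/q))"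
    by (rule nn_integral_Holder_Lp_int[OF q(1) S_sets _ \<omega>m Lp_norm_nonneg _ gm g0 B Bb]) (use N in auto)
  moreover have "(\<integral>\<^sup>+ z\<in>S. ennreal (indicator {z. 1 \<le> d c z} z * d c z powr (-1) * \<bar>\<omega> z\<bar>) \<partial>lebesgue)
     = (\<integral>\<^sup>+ z\<in>S. ennreal (g z * \<bar>\<omega> z\<bar>) \<partial>lebesgue)"
    by (intro nn_integral_cong) (auto simp: g_def split: split_indicator)
  ultimately show ?thesis by (simp add: B_def q'_def)
qed

lemma nn_integral_far_le:
  assumes q: "1 \<le> q" "q < 2" and mq: "memLp q S \<omega>" and c: "c \<in> S"
  shows "(\<integral>\<^sup>+ z\<in>S. ennreal (indicator {z. 1 \<le> d c z} z * d c z powr (-1) * \<bar>\<omega> z\<bar>) \<partial>lebesgue)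
    \<le> ennreal (Lp_norm q S \<omega> * far_field_const q)"
proof (cases "q = 1")
  case True
  then show ?thesis using nn_integral_far_le_L1 mq c by (simp add: far_field_const_def)
next
  case False
  then show ?thesis using nn_integral_far_le_Lp[of q] q mq c by (simp add: far_field_const_def)
qed

lemma nn_integral_inv_dist_le:
  assumes ul: "memLp_ul p S d \<omega>" and p: "2 < p" and q: "1 \<le> q" "q < 2" and mq: "memLp q S \<omega>"
    and c: "c \<in> S"
  shows "(\<integral>\<^sup>+ z\<in>S. ennreal (d c z powr (-1) * \<bar>\<omega> z\<bar>) \<partial>lebesgue)
    \<le> ennreal (ul_norm p S d \<omega> * (36 * sublevel_const (p/(p-1))) powr ((p-1)/p) + Lp_norm q S \<omega> * far_field_const q)"
proof -
  have m1: "(\<lambda>z. ennreal (indicator {z. d c z < 1} z * d c z powr (-1) * \<bar>\<omega> z\<bar>) * indicator S z) \<in> borel_measurable lebesgue"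
    by (rule measurable_density_product) (use dist_measurable[OF c] in measurable)
  have m2: "(\<lambda>z. ennreal (indicator {z. 1 \<le> d c z} z * d c z powr (-1) * \<bar>\<omega> z\<bar>) * indicator S z) \<in> borel_measurable lebesgue"
    by (rule measurable_density_product) (use dist_measurable[OF c] in measurable)
  have "(\<integral>\<^sup>+ z\<in>S. ennreal (d c z powr (-1) * \<bar>\<omega> z\<bar>) \<partial>lebesgue)
     = (\<integral>\<^sup>+ z. ennreal (indicator {z. d c z < 1} z * d c z powr (-1) * \<bar>\<omega> z\<bar>) * indicator S z
          + ennreal (indicator {z. 1 \<le> d c z} z * d c z powr (-1) * \<bar>\<omega> z\<bar>) * indicator S z \<partial>lebesgue)"
    by (intro nn_integral_cong) (auto split: split_indicator)
  also have "\<dots> = (\<integral>\<^sup>+ z\<in>S. ennreal (indicator {z. d c z < 1} z * d c z powr (-1) * \<bar>\<omega> z\<bar>) \<partial>lebesgue)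
      + (\<integral>\<^sup>+ z\<in>S. ennreal (indicator {z. 1 \<le> d c z} z * d c z powr (-1) * \<bar>\<omega> z\<bar>) \<partial>lebesgue)"
    by (rule nn_integral_add[OF m1 m2])
  also have "\<dots> \<le> ennreal (ul_norm p S d \<omega> * (36 * sublevel_const (p/(p-1)) * 1 powr (2 - p/(p-1))) powr ((p-1)/p))
      + ennreal (Lp_norm q S \<omega> * far_field_const q)"
    by (intro add_mono nn_integral_near_le[OF ul p c] nn_integral_far_le[OF q mq c]) auto
  also have "\<dots> = ennreal (ul_norm p S d \<omega> * (36 * sublevel_const (p/(p-1))) powr ((p-1)/p) + Lp_norm q S \<omega> * far_field_const q)"
    using ul_norm_nonneg[OF ul c] far_field_const_nonneg[of q] Lp_norm_nonneg[of q S \<omega>]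
    by (subst ennreal_plus) auto
  finally show ?thesis .
qed

end

section \<open>The kernel estimate\<close>

lemma AE_lebesgue_neq: "AE z in lebesgue. z \<noteq> (c::pt)"
  by (rule AE_completion[OF AE_lborel_singleton])

text \<open>The summands are the constants of nn_integral_profile_le_small and
  nn_integral_profile_le_large below.\<close>
definition kernel_integral_const :: "real \<Rightarrow> real \<Rightarrow> real \<Rightarrow> real" where
  "kernel_integral_const C1 C2 q =
     2884*\<bar>C1\<bar> + 145*\<bar>C2\<bar> + \<bar>C2\<bar> * far_field_const q + (2*\<bar>C1\<bar> + \<bar>C2\<bar>) * (721 + far_field_const q) + 1"

lemma kernel_integral_const_bounds:
  "kernel_integral_const C1 C2 q > 0"
  "2884*\<bar>C1\<bar> + 145*\<bar>C2\<bar> + \<bar>C2\<bar> * far_field_const q \<le> kernel_integral_const C1 C2 q"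
  "(2*\<bar>C1\<bar> + \<bar>C2\<bar>) * (721 + far_field_const q) \<le> kernel_integral_const C1 C2 q"
proof -
  have "0 \<le> \<bar>C2\<bar> * far_field_const q" "0 \<le> (2*\<bar>C1\<bar> + \<bar>C2\<bar>) * (721 + far_field_const q)"
    using far_field_const_nonneg[of q] by auto
  then show "kernel_integral_const C1 C2 q > 0"
    "2884*\<bar>C1\<bar> + 145*\<bar>C2\<bar> + \<bar>C2\<bar> * far_field_const q \<le> kernel_integral_const C1 C2 q"
    "(2*\<bar>C1\<bar> + \<bar>C2\<bar>) * (721 + far_field_const q) \<le> kernel_integral_const C1 C2 q"
    unfolding kernel_integral_const_def by auto
qed

definition holder_profile :: "real \<Rightarrow> real \<Rightarrow> real" where
  "holder_profile p r = (if r \<le> 1/2 then p * r powr (1 - 2/p) else 1)"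

lemma holder_profile_nonneg: "0 \<le> p \<Longrightarrow> 0 \<le> holder_profile p r"
  by (simp add: holder_profile_def)

context area_growth_density
begin

lemma nn_integral_profile_le_three:
  assumes c: "c \<in> S" and r: "0 < r"
  shows "(\<integral>\<^sup>+ z\<in>S. ennreal (kernel_profile C1 C2 r (d c z) * \<bar>\<omega> z\<bar>) \<partial>lebesgue)
     \<le> ennreal (2*\<bar>C1\<bar>) * (\<integral>\<^sup>+ z\<in>S. ennreal (indicator {z. d c z < 2*r} z * d c z powr (-1) * \<bar>\<omega> z\<bar>) \<partial>lebesgue)
       + ennreal (\<bar>C2\<bar>*r) * (\<integral>\<^sup>+ z\<in>S. ennreal (indicator {z. 2*r \<le> d c z} z * indicator {z. d c z < 1} z
            * d c z powr (-2) * \<bar>\<omega> z\<bar>) \<partial>lebesgue)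
       + ennreal (\<bar>C2\<bar>*r) * (\<integral>\<^sup>+ z\<in>S. ennreal (indicator {z. 1 \<le> d c z} z * d c z powr (-1) * \<bar>\<omega> z\<bar>) \<partial>lebesgue)"
  (is "_ \<le> _ * (\<integral>\<^sup>+ z\<in>S. ennreal (?f1 z) \<partial>lebesgue) + _ * (\<integral>\<^sup>+ z\<in>S. ennreal (?f2 z) \<partial>lebesgue)
        + _ * (\<integral>\<^sup>+ z\<in>S. ennreal (?f3 z) \<partial>lebesgue)")
proof (rule nn_integral_le_linear_comb3)
  have dm: "d c \<in> borel_measurable lebesgue" by (rule dist_measurable[OF c])
  show "(\<lambda>z. ennreal (?f1 z) * indicator S z) \<in> borel_measurable lebesgue"
    by (rule measurable_density_product) (use dm in measurable)
  show "(\<lambda>z. ennreal (?f2 z) * indicator S z) \<in> borel_measurable lebesgue"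
    by (rule measurable_density_product) (use dm in measurable)
  show "(\<lambda>z. ennreal (?f3 z) * indicator S z) \<in> borel_measurable lebesgue"
    by (rule measurable_density_product) (use dm in measurable)
  fix z assume "z \<in> S"
  have "kernel_profile C1 C2 r (d c z) * \<bar>\<omega> z\<bar> \<le> (2*\<bar>C1\<bar> * (indicator {x. x < 2*r} (d c z) * d c z powr (-1))
     + \<bar>C2\<bar>*r * (indicator {x. 2*r \<le> x} (d c z) * indicator {x. x < 1} (d c z) * d c z powr (-2))
     + \<bar>C2\<bar>*r * (indicator {x. 1 \<le> x} (d c z) * d c z powr (-1))) * \<bar>\<omega> z\<bar>"
    by (intro mult_right_mono kernel_profile_le_split dist_nonneg[OF c]) (use r in auto)
  then show "kernel_profile C1 C2 r (d c z) * \<bar>\<omega> z\<bar> \<le> 2*\<bar>C1\<bar> * ?f1 z + \<bar>C2\<bar>*r * ?f2 z + \<bar>C2\<bar>*r * ?f3 z"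
    by (simp add: indicator_def algebra_simps)
qed (use r in simp_all)

lemma nn_integral_profile_le_small:
  assumes ul: "memLp_ul p S d \<omega>" and p: "2 < p" and q: "1 \<le> q" "q < 2" and mq: "memLp q S \<omega>"
    and c: "c \<in> S" and r: "0 < r" "r \<le> 1/2"
  shows "(\<integral>\<^sup>+ z\<in>S. ennreal (kernel_profile C1 C2 r (d c z) * \<bar>\<omega> z\<bar>) \<partial>lebesgue)
    \<le> ennreal ((2884*\<bar>C1\<bar> + 145*\<bar>C2\<bar> + \<bar>C2\<bar> * far_field_const q)
         * (max 1 (1/(p-2)) * (ul_norm p S d \<omega> + Lp_norm q S \<omega>) * (p * r powr (1-2/p))))"
proof -
  define U where "U = ul_norm p S d \<omega>"
  define N where "N = Lp_norm q S \<omega>"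
  define T1 where "T1 = (36 * sublevel_const (p/(p-1)) * (2*r) powr (2 - p/(p-1))) powr ((p-1)/p)"
  define T2 where "T2 = (36 * superlevel_const (2*(p/(p-1))) * (2*r) powr (2 - 2*(p/(p-1)))) powr ((p-1)/p)"
  have U0: "U \<ge> 0" unfolding U_def by (rule ul_norm_nonneg[OF ul c])
  have N0: "N \<ge> 0" unfolding N_def by (rule Lp_norm_nonneg)
  have T0: "T1 \<ge> 0" "T2 \<ge> 0" by (simp_all add: T1_def T2_def)
  have "(\<integral>\<^sup>+ z\<in>S. ennreal (kernel_profile C1 C2 r (d c z) * \<bar>\<omega> z\<bar>) \<partial>lebesgue)
     \<le> ennreal (2*\<bar>C1\<bar>) * (\<integral>\<^sup>+ z\<in>S. ennreal (indicator {z. d c z < 2*r} z * d c z powr (-1) * \<bar>\<omega> z\<bar>) \<partial>lebesgue)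
       + ennreal (\<bar>C2\<bar>*r) * (\<integral>\<^sup>+ z\<in>S. ennreal (indicator {z. 2*r \<le> d c z} z * indicator {z. d c z < 1} z
            * d c z powr (-2) * \<bar>\<omega> z\<bar>) \<partial>lebesgue)
       + ennreal (\<bar>C2\<bar>*r) * (\<integral>\<^sup>+ z\<in>S. ennreal (indicator {z. 1 \<le> d c z} z * d c z powr (-1) * \<bar>\<omega> z\<bar>) \<partial>lebesgue)"
    by (rule nn_integral_profile_le_three[OF c r(1)])
  also have "\<dots> \<le> ennreal (2*\<bar>C1\<bar>) * ennreal (U * T1) + ennreal (\<bar>C2\<bar>*r) * ennreal (U * T2)
       + ennreal (\<bar>C2\<bar>*r) * ennreal (N * far_field_const q)"
    unfolding U_def N_def T1_def T2_def using r
    by (intro add_mono mult_left_mono nn_integral_near_le[OF ul p c] nn_integral_annulus_le[OF ul p c]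
        nn_integral_far_le[OF q mq c]) auto
  also have "\<dots> = ennreal (2*\<bar>C1\<bar> * (U * T1) + \<bar>C2\<bar>*r * (U * T2) + \<bar>C2\<bar>*r * (N * far_field_const q))"
    using U0 N0 T0 r far_field_const_nonneg[of q] by (simp add: ennreal_plus ennreal_mult)
  also have "\<dots> \<le> ennreal ((2884*\<bar>C1\<bar> + 145*\<bar>C2\<bar> + \<bar>C2\<bar> * far_field_const q)
         * (max 1 (1/(p-2)) * (U + N) * (p * r powr (1-2/p))))"
  proof (rule ennreal_leI, rule near_field_terms_le)
    show "T1 \<le> 1442 * max 1 (1/(p-2)) * r powr (1-2/p)"
      unfolding T1_def by (rule near_factor_bound[OF p r(1)])
    show "r * T2 \<le> 145 * p * r powr (1-2/p)"
      unfolding T2_def by (rule annulus_factor_bound[OF p r(1)])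
    show "r \<le> r powr (1-2/p)" using r p powr_mono'[of "1 - 2/p" 1 r] by simp
  qed (use U0 N0 p r far_field_const_nonneg in auto)
  finally show ?thesis by (simp add: U_def N_def)
qed

lemma nn_integral_profile_le_large:
  assumes ul: "memLp_ul p S d \<omega>" and p: "2 < p" and q: "1 \<le> q" "q < 2" and mq: "memLp q S \<omega>"
    and c: "c \<in> S" and r: "1/2 < r"
  shows "(\<integral>\<^sup>+ z\<in>S. ennreal (kernel_profile C1 C2 r (d c z) * \<bar>\<omega> z\<bar>) \<partial>lebesgue)
    \<le> ennreal ((2*\<bar>C1\<bar> + \<bar>C2\<bar>) * (721 + far_field_const q) * (max 1 (1/(p-2)) * (ul_norm p S d \<omega> + Lp_norm q S \<omega>)))"
proof -
  define U where "U = ul_norm p S d \<omega>"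
  define N where "N = Lp_norm q S \<omega>"
  define M where "M = max 1 (1/(p-2))"
  have U0: "U \<ge> 0" unfolding U_def using ul_norm_nonneg[OF ul c] by simp
  have N0: "N \<ge> 0" unfolding N_def by (rule Lp_norm_nonneg)
  have M1: "M \<ge> 1" by (simp add: M_def)
  have dm: "d c \<in> borel_measurable lebesgue" by (rule dist_measurable[OF c])
  have m: "(\<lambda>z. ennreal (d c z powr (-1) * \<bar>\<omega> z\<bar>) * indicator S z) \<in> borel_measurable lebesgue"
    by (rule measurable_density_product) (use dm in measurable)
  have "(\<integral>\<^sup>+ z\<in>S. ennreal (kernel_profile C1 C2 r (d c z) * \<bar>\<omega> z\<bar>) \<partial>lebesgue)
     \<le> (\<integral>\<^sup>+ z. ennreal (2*\<bar>C1\<bar> + \<bar>C2\<bar>) * (ennreal (d c z powr (-1) * \<bar>\<omega> z\<bar>) * indicator S z) \<partial>lebesgue)"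
  proof (intro nn_integral_mono)
    fix z
    have "kernel_profile C1 C2 r (d c z) * \<bar>\<omega> z\<bar> \<le> (2*\<bar>C1\<bar> + \<bar>C2\<bar>) * d c z powr (-1) * \<bar>\<omega> z\<bar>"
      by (intro mult_right_mono kernel_profile_le_inv dist_nonneg[OF c] r) auto
    then have "ennreal (kernel_profile C1 C2 r (d c z) * \<bar>\<omega> z\<bar>) \<le> ennreal (2*\<bar>C1\<bar> + \<bar>C2\<bar>) * ennreal (d c z powr (-1) * \<bar>\<omega> z\<bar>)"
      by (subst ennreal_mult[symmetric]) (auto intro!: ennreal_leI simp: mult_ac)
    then show "ennreal (kernel_profile C1 C2 r (d c z) * \<bar>\<omega> z\<bar>) * indicator S z
      \<le> ennreal (2*\<bar>C1\<bar> + \<bar>C2\<bar>) * (ennreal (d c z powr (-1) * \<bar>\<omega> z\<bar>) * indicator S z)"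
      by (auto split: split_indicator)
  qed
  also have "\<dots> = ennreal (2*\<bar>C1\<bar> + \<bar>C2\<bar>) * (\<integral>\<^sup>+ z\<in>S. ennreal (d c z powr (-1) * \<bar>\<omega> z\<bar>) \<partial>lebesgue)"
    by (rule nn_integral_cmult[OF m])
  also have "\<dots> \<le> ennreal (2*\<bar>C1\<bar> + \<bar>C2\<bar>) * ennreal (U * (36 * sublevel_const (p/(p-1))) powr ((p-1)/p) + N * far_field_const q)"
    unfolding U_def N_def by (intro mult_left_mono nn_integral_inv_dist_le[OF ul p q mq c]) auto
  also have "\<dots> = ennreal ((2*\<bar>C1\<bar> + \<bar>C2\<bar>) * (U * (36 * sublevel_const (p/(p-1))) powr ((p-1)/p) + N * far_field_const q))"
    by (rule ennreal_mult[symmetric]) (use U0 N0 far_field_const_nonneg[of q] in auto)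
  also have "\<dots> \<le> ennreal ((2*\<bar>C1\<bar> + \<bar>C2\<bar>) * (721 + far_field_const q) * (M * (U + N)))"
    using far_field_terms_le[OF U0 N0 M1 far_field_const_nonneg[of q] near_const_factor_bound[OF p, folded M_def]]
    by (intro ennreal_leI) (simp add: mult_left_mono mult.assoc)
  finally show ?thesis by (simp add: U_def N_def M_def)
qed

lemma kernel_diff_integral_eq_0:
  assumes K: "kernel_K1K2 S d k C1 C2" and x: "x \<in> S" and y: "y \<in> S" and xy: "x = y \<or> d x y = 0"
  shows "(\<integral>\<^sup>+ z\<in>S. ennreal (norm (k x z - k y z) * \<bar>\<omega> z\<bar>) \<partial>lebesgue) = 0"
proof -
  have ae: "AE z in lebesgue. ennreal (norm (k x z - k y z) * \<bar>\<omega> z\<bar>) * indicator S z = 0"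
    using AE_lebesgue_neq[of x] AE_lebesgue_neq[of y]
  proof eventually_elim
    case (elim z)
    show ?case
    proof (cases "z \<in> S \<and> x \<noteq> y")
      case True
      with xy have "d x y = 0" by simp
      moreover have "norm (k x z - k y z) \<le> C2 * d x y / (d x z * d y z)"
        using K x y True elim unfolding kernel_K1K2_def by blast
      ultimately show ?thesis by simp
    qed auto
  qed
  show ?thesis using nn_integral_cong_AE[OF ae] by simp
qed

lemma kernel_diff_integral_le_profiles:
  assumes K: "kernel_K1K2 S d k C1 C2" and x: "x \<in> S" and y: "y \<in> S" and r: "d x y > 0"
  shows "(\<integral>\<^sup>+ z\<in>S. ennreal (norm (k x z - k y z) * \<bar>\<omega> z\<bar>) \<partial>lebesgue)
    \<le> (\<integral>\<^sup>+ z\<in>S. ennreal (kernel_profile C1 C2 (d x y) (d x z) * \<bar>\<omega> z\<bar>) \<partial>lebesgue)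
     + (\<integral>\<^sup>+ z\<in>S. ennreal (kernel_profile C1 C2 (d x y) (d y z) * \<bar>\<omega> z\<bar>) \<partial>lebesgue)"
proof -
  have pm: "(\<lambda>z. kernel_profile C1 C2 (d x y) (d c z)) \<in> borel_measurable lebesgue" if "c \<in> S" for c
    unfolding kernel_profile_def using dist_measurable[OF that] by measurable
  have m1: "(\<lambda>z. ennreal (kernel_profile C1 C2 (d x y) (d x z) * \<bar>\<omega> z\<bar>) * indicator S z) \<in> borel_measurable lebesgue"
    by (rule measurable_density_product[OF pm[OF x]])
  have m2: "(\<lambda>z. ennreal (kernel_profile C1 C2 (d x y) (d y z) * \<bar>\<omega> z\<bar>) * indicator S z) \<in> borel_measurable lebesgue"
    by (rule measurable_density_product[OF pm[OF y]])
  have "(\<integral>\<^sup>+ z\<in>S. ennreal (norm (k x z - k y z) * \<bar>\<omega> z\<bar>) \<partial>lebesgue)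
    \<le> (\<integral>\<^sup>+ z. ennreal (kernel_profile C1 C2 (d x y) (d x z) * \<bar>\<omega> z\<bar>) * indicator S z
        + ennreal (kernel_profile C1 C2 (d x y) (d y z) * \<bar>\<omega> z\<bar>) * indicator S z \<partial>lebesgue)"
  proof (rule nn_integral_mono_AE)
    show "AE z in lebesgue. ennreal (norm (k x z - k y z) * \<bar>\<omega> z\<bar>) * indicator S z
      \<le> ennreal (kernel_profile C1 C2 (d x y) (d x z) * \<bar>\<omega> z\<bar>) * indicator S z
        + ennreal (kernel_profile C1 C2 (d x y) (d y z) * \<bar>\<omega> z\<bar>) * indicator S z"
      using AE_lebesgue_neq[of x] AE_lebesgue_neq[of y]
    proof eventually_elim
      case (elim z)
      show ?case
      proof (cases "z \<in> S")
        case True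
        have pw: "norm (k x z - k y z) \<le> kernel_profile C1 C2 (d x y) (d x z) + kernel_profile C1 C2 (d x y) (d y z)"
          by (rule norm_kernel_diff_le_profiles[OF K x y True]) (use elim r dist_nonneg[OF x] dist_nonneg[OF y] in auto)
        then have "norm (k x z - k y z) * \<bar>\<omega> z\<bar>
            \<le> kernel_profile C1 C2 (d x y) (d x z) * \<bar>\<omega> z\<bar> + kernel_profile C1 C2 (d x y) (d y z) * \<bar>\<omega> z\<bar>"
          by (simp add: distrib_right[symmetric] mult_right_mono)
        then show ?thesis
          using True kernel_profile_nonneg[OF dist_nonneg[OF x] less_imp_le[OF r]]
            kernel_profile_nonneg[OF dist_nonneg[OF y] less_imp_le[OF r]]
          by (simp add: ennreal_plus[symmetric] ennreal_leI del: ennreal_plus)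
      qed simp
    qed
  qed
  also have "\<dots> = (\<integral>\<^sup>+ z\<in>S. ennreal (kernel_profile C1 C2 (d x y) (d x z) * \<bar>\<omega> z\<bar>) \<partial>lebesgue)
     + (\<integral>\<^sup>+ z\<in>S. ennreal (kernel_profile C1 C2 (d x y) (d y z) * \<bar>\<omega> z\<bar>) \<partial>lebesgue)"
    by (rule nn_integral_add[OF m1 m2])
  finally show ?thesis .
qed

lemma nn_integral_profile_le:
  assumes ul: "memLp_ul p S d \<omega>" and p: "2 < p" and q: "1 \<le> q" "q < 2" and mq: "memLp q S \<omega>"
    and c: "c \<in> S" and r: "0 < r"
  shows "(\<integral>\<^sup>+ z\<in>S. ennreal (kernel_profile C1 C2 r (d c z) * \<bar>\<omega> z\<bar>) \<partial>lebesgue)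
    \<le> ennreal (kernel_integral_const C1 C2 q * (max 1 (1/(p-2)) * (ul_norm p S d \<omega> + Lp_norm q S \<omega>))
         * holder_profile p r)"
proof -
  define W where "W = max 1 (1/(p-2)) * (ul_norm p S d \<omega> + Lp_norm q S \<omega>)"
  have W0: "W \<ge> 0" unfolding W_def
    using ul_norm_nonneg[OF ul c] Lp_norm_nonneg[of q S \<omega>] by (intro mult_nonneg_nonneg) auto
  note K = kernel_integral_const_bounds[of C1 C2 q]
  show ?thesis
  proof (cases "r \<le> 1/2")
    case True
    have "(\<integral>\<^sup>+ z\<in>S. ennreal (kernel_profile C1 C2 r (d c z) * \<bar>\<omega> z\<bar>) \<partial>lebesgue)
      \<le> ennreal ((2884*\<bar>C1\<bar> + 145*\<bar>C2\<bar> + \<bar>C2\<bar> * far_field_const q) * W * holder_profile p r)"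
      using nn_integral_profile_le_small[OF ul p q mq c r True] True
      by (simp add: W_def holder_profile_def mult.assoc)
    also have "\<dots> \<le> ennreal (kernel_integral_const C1 C2 q * W * holder_profile p r)"
      using K W0 holder_profile_nonneg[of p r] p by (intro ennreal_leI mult_right_mono) auto
    finally show ?thesis by (simp add: W_def)
  next
    case False
    have "(\<integral>\<^sup>+ z\<in>S. ennreal (kernel_profile C1 C2 r (d c z) * \<bar>\<omega> z\<bar>) \<partial>lebesgue)
      \<le> ennreal ((2*\<bar>C1\<bar> + \<bar>C2\<bar>) * (721 + far_field_const q) * W * holder_profile p r)"
      using nn_integral_profile_le_large[OF ul p q mq c] False
      by (simp add: W_def holder_profile_def)
    also have "\<dots> \<le> ennreal (kernel_integral_const C1 C2 q * W * holder_profile p r)"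
      using K W0 holder_profile_nonneg[of p r] p by (intro ennreal_leI mult_right_mono) auto
    finally show ?thesis by (simp add: W_def)
  qed
qed

lemma kernel_diff_integral_le:
  assumes K: "kernel_K1K2 S d k C1 C2" and x: "x \<in> S" and y: "y \<in> S"
    and ul: "memLp_ul p S d \<omega>" and p: "2 < p" and q: "1 \<le> q" "q < 2" and mq: "memLp q S \<omega>"
  shows "(\<integral>\<^sup>+ z\<in>S. ennreal (norm (k x z - k y z) * \<bar>\<omega> z\<bar>) \<partial>lebesgue)
    \<le> ennreal (2 * kernel_integral_const C1 C2 q * (max 1 (1/(p-2)) * (ul_norm p S d \<omega> + Lp_norm q S \<omega>))
          * holder_profile p (d x y))"
proof (cases "x = y \<or> d x y = 0")
  case True
  then show ?thesis using kernel_diff_integral_eq_0[OF K x y] by simp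
next
  case False
  then have r: "d x y > 0" using dist_nonneg[OF x, of y] by auto
  define B where "B = kernel_integral_const C1 C2 q * (max 1 (1/(p-2)) * (ul_norm p S d \<omega> + Lp_norm q S \<omega>))
          * holder_profile p (d x y)"
  have "B \<ge> 0" unfolding B_def
    using kernel_integral_const_bounds(1)[of C1 C2 q] ul_norm_nonneg[OF ul x] Lp_norm_nonneg[of q S \<omega>]
      holder_profile_nonneg[of p] p by (intro mult_nonneg_nonneg) auto
  have "(\<integral>\<^sup>+ z\<in>S. ennreal (norm (k x z - k y z) * \<bar>\<omega> z\<bar>) \<partial>lebesgue) \<le> ennreal B + ennreal B"
    using kernel_diff_integral_le_profiles[OF K x y r]
      nn_integral_profile_le[OF ul p q mq x r] nn_integral_profile_le[OF ul p q mq y r]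
    unfolding B_def by (meson add_mono order_trans)
  also have "\<dots> = ennreal (2 * B)" using \<open>B \<ge> 0\<close> by (simp add: ennreal_plus[symmetric])
  finally show ?thesis by (simp add: B_def mult_ac)
qed

end

section \<open>The Hoelder and Yudovich estimates\<close>

lemma one_le_holder_factor:
  assumes p: "2 < (p::real)" and r: "1/2 < r" shows "1 \<le> p * r powr (1 - 2/p)"
proof (cases "1 \<le> r")
  case True
  then have "1 \<le> r powr (1 - 2/p)" using p by (intro ge_one_powr_ge_zero) auto
  then show ?thesis using p mult_mono[of 1 p 1 "r powr (1-2/p)"] by simp
next
  case False
  then have "r powr 1 \<le> r powr (1 - 2/p)" using r p by (intro powr_mono') auto
  then have "r \<le> r powr (1 - 2/p)" using r by simp
  then have "2 * (1/2) \<le> p * r powr (1 - 2/p)" using p r by (intro mult_mono) auto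
  then show ?thesis by simp
qed

lemma exp_neg2_less_half: "exp (-2::real) < 1/2"
proof -
  have "1 + 2 \<le> exp (2::real)" by (rule exp_ge_add_one_self)
  then show ?thesis by (simp add: exp_minus field_simps)
qed

lemma powr_one_minus_ln_le:
  assumes r: "0 < (r::real)" "r \<le> exp (-2)"
  shows "r powr (1 - 2 / (1 - ln r)) \<le> exp 2 * r"
proof -
  have "ln r \<le> ln (exp (-2))" using r by (subst ln_le_cancel_iff) auto
  then have lr: "ln r \<le> -2" by simp
  define p where "p = 1 - ln r"
  have p: "p \<ge> 3" using lr by (simp add: p_def)
  have "r powr (1 - 2/p) = exp ((1 - 2/p) * ln r)" using r by (simp add: powr_def)
  also have "(1 - 2/p) * ln r = ln r + 2 * (- ln r / p)" using p by (simp add: field_simps)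
  also have "exp (ln r + 2 * (- ln r / p)) = r * exp (2 * (- ln r / p))"
    using r by (simp only: exp_add exp_ln)
  also have "\<dots> \<le> r * exp 2"
  proof -
    have "- ln r / p \<le> 1" using p by (simp add: p_def field_simps)
    then show ?thesis using r by (intro mult_left_mono) auto
  qed
  finally show ?thesis by (simp add: p_def mult.commute)
qed

lemma holder_profile_le: "2 < p \<Longrightarrow> holder_profile p r \<le> p * r powr (1 - 2/p)"
  using one_le_holder_factor[of p r] by (auto simp: holder_profile_def)

lemma growth_function_ge_1: "growth_function \<Theta> \<Longrightarrow> 3 \<le> p \<Longrightarrow> 1 \<le> \<Theta> p"
  unfolding growth_function_def using mono_onD[of "{1..}" \<Theta> 3 p] by force

text \<open>The exponent p = 1 - ln r balances the factor p against r powr (-2/p) = e^2.\<close>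
lemma ex_holder_profile_le_phi_Theta:
  assumes \<Theta>: "growth_function \<Theta>" and r: "0 \<le> r"
  obtains p where "3 \<le> p" "holder_profile p r * \<Theta> p \<le> exp 2 * phi_Theta \<Theta> r"
proof (cases "0 < r \<and> r \<le> exp (-2)")
  case True
  define p where "p = 1 - ln r"
  have "ln r \<le> ln (exp (-2))" using True by (subst ln_le_cancel_iff) auto
  then have p3: "3 \<le> p" by (simp add: p_def)
  have "r \<le> 1/2" using True exp_neg2_less_half by simp
  then have "holder_profile p r = p * r powr (1 - 2/p)" by (simp add: holder_profile_def)
  also have "\<dots> \<le> p * (exp 2 * r)"
    unfolding p_def using powr_one_minus_ln_le[of r] True p3 p_def by (intro mult_left_mono) auto
  finally have "holder_profile p r * \<Theta> p \<le> p * (exp 2 * r) * \<Theta> p"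
    using growth_function_ge_1[OF \<Theta> p3] by (intro mult_right_mono) auto
  also have "\<dots> = exp 2 * phi_Theta \<Theta> r"
    using True by (simp add: phi_Theta_def p_def mult_ac)
  finally show ?thesis using that p3 by blast
next
  case False
  have "holder_profile 3 r \<le> 3"
    using r by (auto simp: holder_profile_def intro: powr_le1)
  then have "holder_profile 3 r * \<Theta> 3 \<le> 3 * \<Theta> 3"
    using growth_function_ge_1[OF \<Theta>, of 3] by (intro mult_right_mono) auto
  moreover have "phi_Theta \<Theta> r = (if r = 0 then 0 else 3 * exp (-2) * \<Theta> 3)"
    using False r by (auto simp: phi_Theta_def)
  moreover have "holder_profile 3 0 = 0"
    by (simp add: holder_profile_def)
  ultimately have "holder_profile 3 r * \<Theta> 3 \<le> exp 2 * phi_Theta \<Theta> r"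
    by (cases "r = 0") (simp_all add: exp_minus field_simps)
  then show ?thesis by (rule that[rotated]) simp
qed

lemma ul_norm_le_Y_ul_norm:
  assumes "growth_function \<Theta>" "memY_ul \<Theta> S d f" "1 \<le> p"
  shows "ul_norm p S d f \<le> \<Theta> p * Y_ul_norm \<Theta> S d f"
proof -
  have "ul_norm p S d f / \<Theta> p \<le> Y_ul_norm \<Theta> S d f"
    unfolding Y_ul_norm_def by (rule cSUP_upper) (use assms in \<open>auto simp: memY_ul_def\<close>)
  moreover have "\<Theta> p > 0" using assms by (simp add: growth_function_def)
  ultimately show ?thesis by (simp add: field_simps)
qed

lemma Y_ul_norm_nonneg:
  assumes "growth_function \<Theta>" "memY_ul \<Theta> S d f" "c \<in> S"
  shows "Y_ul_norm \<Theta> S d f \<ge> 0"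
proof -
  have "0 \<le> ul_norm 3 S d f" using assms ul_norm_nonneg by (auto simp: memY_ul_def)
  also have "\<dots> \<le> \<Theta> 3 * Y_ul_norm \<Theta> S d f" by (rule ul_norm_le_Y_ul_norm) (use assms in auto)
  finally show ?thesis
    using assms(1) by (simp add: growth_function_def zero_le_mult_iff)
qed

lemma kernel_diff_integral_Holder_estimate:
  assumes "admissible_domain S d" "kernel_K1K2 S d k C1 C2" "1 \<le> q" "q < 2" "2 < p"
    "memLp q S \<omega>" "memLp_ul p S d \<omega>" "x \<in> S" "y \<in> S"
  shows "(\<integral>\<^sup>+ z\<in>S. ennreal (norm (k x z - k y z) * \<bar>\<omega> z\<bar>) \<partial>lebesgue)
    \<le> ennreal (2 * kernel_integral_const C1 C2 q * max 1 (1 / (p - 2)) * (Lp_norm q S \<omega> + ul_norm p S d \<omega>)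
               * p * d x y powr (1 - 2 / p))"
proof -
  interpret area_growth_density S d \<omega>
    using assms admissible_domain_quadratic_area_growth by unfold_locales (auto simp: memLp_def)
  define W where "W = 2 * kernel_integral_const C1 C2 q * (max 1 (1/(p-2)) * (ul_norm p S d \<omega> + Lp_norm q S \<omega>))"
  have "W \<ge> 0" unfolding W_def
    using kernel_integral_const_bounds(1)[of C1 C2 q] ul_norm_nonneg[of p S d \<omega> x] Lp_norm_nonneg[of q S \<omega>] assms
    by (intro mult_nonneg_nonneg) auto
  have "(\<integral>\<^sup>+ z\<in>S. ennreal (norm (k x z - k y z) * \<bar>\<omega> z\<bar>) \<partial>lebesgue) \<le> ennreal (W * holder_profile p (d x y))"
    unfolding W_def using assms by (intro kernel_diff_integral_le) auto
  also have "\<dots> \<le> ennreal (W * (p * d x y powr (1 - 2/p)))"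
    using \<open>W \<ge> 0\<close> holder_profile_le assms by (intro ennreal_leI mult_left_mono) auto
  finally show ?thesis by (simp add: W_def mult_ac add.commute)
qed

lemma kernel_diff_integral_Yudovich_estimate:
  assumes "admissible_domain S d" "kernel_K1K2 S d k C1 C2" "1 \<le> q" "q < 2" "growth_function \<Theta>"
    "memLp q S \<omega>" "memY_ul \<Theta> S d \<omega>" "x \<in> S" "y \<in> S"
  shows "(\<integral>\<^sup>+ z\<in>S. ennreal (norm (k x z - k y z) * \<bar>\<omega> z\<bar>) \<partial>lebesgue)
    \<le> ennreal (2 * kernel_integral_const C1 C2 q * exp 2 * (Lp_norm q S \<omega> + Y_ul_norm \<Theta> S d \<omega>)
               * phi_Theta \<Theta> (d x y))"
proof -
  interpret area_growth_density S d \<omega>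
    using assms admissible_domain_quadratic_area_growth by unfold_locales (auto simp: memLp_def)
  define K where "K = 2 * kernel_integral_const C1 C2 q"
  define N where "N = Lp_norm q S \<omega>"
  define Y where "Y = Y_ul_norm \<Theta> S d \<omega>"
  obtain p where p3: "3 \<le> p" and p: "holder_profile p (d x y) * \<Theta> p \<le> exp 2 * phi_Theta \<Theta> (d x y)"
    using ex_holder_profile_le_phi_Theta[OF assms(5) dist_nonneg[OF assms(8)]] by blast
  have ul: "memLp_ul p S d \<omega>" using assms p3 by (simp add: memY_ul_def)
  have "N \<ge> 0" "Y \<ge> 0" "K > 0" "1 \<le> \<Theta> p"
    using Lp_norm_nonneg Y_ul_norm_nonneg[OF assms(5,7,8)] kernel_integral_const_bounds(1)
      growth_function_ge_1[OF assms(5) p3] by (auto simp: N_def Y_def K_def)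
  have "ul_norm p S d \<omega> + N \<le> \<Theta> p * (N + Y)"
    using ul_norm_le_Y_ul_norm[OF assms(5,7), of p] p3 \<open>N \<ge> 0\<close> \<open>1 \<le> \<Theta> p\<close>
      mult_right_mono[of 1 "\<Theta> p" N] by (simp add: Y_def algebra_simps)
  then have "K * (ul_norm p S d \<omega> + N) * holder_profile p (d x y)
      \<le> K * (\<Theta> p * (N + Y)) * holder_profile p (d x y)"
    using \<open>K > 0\<close> holder_profile_nonneg[of p] p3 by (intro mult_right_mono mult_left_mono) auto
  also have "\<dots> = K * (N + Y) * (holder_profile p (d x y) * \<Theta> p)" by (simp only: mult_ac)
  also have "\<dots> \<le> K * (N + Y) * (exp 2 * phi_Theta \<Theta> (d x y))"
    using p \<open>K > 0\<close> \<open>N \<ge> 0\<close> \<open>Y \<ge> 0\<close> by (intro mult_left_mono) auto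
  finally have bound: "K * (ul_norm p S d \<omega> + N) * holder_profile p (d x y)
      \<le> K * exp 2 * (N + Y) * phi_Theta \<Theta> (d x y)" by (simp only: mult_ac)
  have "max 1 (1 / (p - 2)) = 1" using p3 by simp
  then have "(\<integral>\<^sup>+ z\<in>S. ennreal (norm (k x z - k y z) * \<bar>\<omega> z\<bar>) \<partial>lebesgue)
      \<le> ennreal (K * (ul_norm p S d \<omega> + N) * holder_profile p (d x y))"
    using kernel_diff_integral_le[OF assms(2,8,9) ul _ assms(3,4,6)] p3 by (simp add: K_def N_def)
  also have "\<dots> \<le> ennreal (K * exp 2 * (N + Y) * phi_Theta \<Theta> (d x y))"
    by (rule ennreal_leI[OF bound])
  finally show ?thesis by (simp add: K_def N_def Y_def)
qed

theorem mainTheorem2: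
  fixes C1 C2 q :: real
  assumes "1 \<le> q" and "q < 2"
  shows "(\<exists>C>0. \<forall>S d k \<omega> p x y.
            admissible_domain S d \<longrightarrow> kernel_K1K2 S d k C1 C2 \<longrightarrow>
            2 < p \<longrightarrow> memLp q S \<omega> \<longrightarrow> memLp_ul p S d \<omega> \<longrightarrow> x \<in> S \<longrightarrow> y \<in> S \<longrightarrow>
            (\<integral>\<^sup>+ z\<in>S. ennreal (norm (k x z - k y z) * \<bar>\<omega> z\<bar>) \<partial>lebesgue)
              \<le> ennreal (C * max 1 (1 / (p - 2)) * (Lp_norm q S \<omega> + ul_norm p S d \<omega>)
                         * p * d x y powr (1 - 2 / p)))
       \<and> (\<exists>C'>0. \<forall>S d k \<omega> \<Theta> x y.
            admissible_domain S d \<longrightarrow> kernel_K1K2 S d k C1 C2 \<longrightarrow>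
            growth_function \<Theta> \<longrightarrow> memLp q S \<omega> \<longrightarrow> memY_ul \<Theta> S d \<omega> \<longrightarrow> x \<in> S \<longrightarrow> y \<in> S \<longrightarrow>
            (\<integral>\<^sup>+ z\<in>S. ennreal (norm (k x z - k y z) * \<bar>\<omega> z\<bar>) \<partial>lebesgue)
              \<le> ennreal (C' * (Lp_norm q S \<omega> + Y_ul_norm \<Theta> S d \<omega>) * phi_Theta \<Theta> (d x y)))"
proof -
  have "kernel_integral_const C1 C2 q > 0" by (rule kernel_integral_const_bounds(1))
  then show ?thesis
    using kernel_diff_integral_Holder_estimate kernel_diff_integral_Yudovich_estimate assms
    by (intro conjI[OF exI[of _ "2 * kernel_integral_const C1 C2 q"]
          exI[of _ "2 * kernel_integral_const C1 C2 q * exp 2"]]) auto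
qed

end
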